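(* Let $\alpha>0$, $R>0$ and $B>R$ be fixed. For $n\ge 1$ observe $X^{(n)}$ from the Gaussian white noise model $dX^{(n)}(t)=f(t)\,dt+n^{-1/2}\,dW(t)$, $t\in[0,1]$, where $W$ is a standard Brownian motion and $f\in L^\infty[0,1]$. Equivalently one observes $x_{lk}=\int_0^1\psi_{lk}\,dX^{(n)}=f_{lk}+n^{-1/2}\varepsilon_{lk}$, $l\ge0$, $0\le k\le 2^l-1$, where $f_{lk}=\langle f,\psi_{lk}\rangle_2$ and the $\varepsilon_{lk}$ are i.i.d. $N(0,1)$. Suppose the true function $f_0$ satisfies $$\sup_{l\ge0,\,0\le k\le 2^l-1}2^{l(1/2+\alpha)}|f_{0,lk}|\le R .$$ Let the prior $\Pi$ on $f$ make the coefficients $f_{lk}$ independent, $f_{lk}$ having Lebesgue density $x\mapsto\sigma_l^{-1}\varphi(x/\sigma_l)$ on $\mathbb{R}$, where $\varphi(x)=\frac{1}{2B}\mathbf{1}_{[-B,B]}(x)$ and $\sigma_l=2^{-l(1/2+\alpha)}$. Then there exists $M>0$ such that for all $n\ge2$, $$E_{f_0}^n\int\|f-f_0\|_\infty\,d\Pi(f\mid X^{(n)})\le M\Big(\frac{\log n}{n}\Big)^{\alpha/(2\alpha+1)} .$$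
   Context: $\{\psi_{lk}: l\ge0,\ 0\le k\le 2^l-1\}$ is the boundary-corrected wavelet basis of $L^2[0,1]$ of Cohen–Daubechies–Vial (relabelled so that levels start at $l=0$), chosen sufficiently regular: it is an orthonormal basis of $L^2[0,1]$; $\psi_{lk}$ is supported in a set of diameter at most a constant times $2^{-l}$; $\|\psi_{lk}\|_\infty\lesssim 2^{l/2}$; $\|\sum_k|\psi_{lk}|\|_\infty\lesssim 2^{l/2}$; each $\psi_{lk}$ is Hölder of order $S\ge\alpha$. $\langle\cdot,\cdot\rangle_2$ is the $L^2[0,1]$ inner product. $\Pi(\cdot\mid X^{(n)})$ denotes the posterior distribution and $E_{f_0}^n$ expectation under the law of $X^{(n)}$ when $f=f_0$. *)

theory Defs
  imports "HOL-Probability.Probability"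
begin

definition wav_idx :: "(nat \<times> nat) set" where
  "wav_idx = {(l, k). k < 2 ^ l}"

definition holder01 :: "real \<Rightarrow> (real \<Rightarrow> real) \<Rightarrow> bool" where
  "holder01 S g \<longleftrightarrow> (\<exists>(m::nat) (D::nat \<Rightarrow> real \<Rightarrow> real) (C::real).
      real m < S \<and> S \<le> real m + 1 \<and>
      (\<forall>t\<in>{0..1}. D 0 t = g t) \<and>
      (\<forall>j<m. \<forall>t\<in>{0..1}. (D j has_real_derivative D (Suc j) t) (at t within {0..1})) \<and>
      (\<forall>s\<in>{0..1}. \<forall>t\<in>{0..1}. \<bar>D m s - D m t\<bar> \<le> C * \<bar>s - t\<bar> powr (S - real m)))"

text \<open>Standing assumptions on the (boundary-corrected, CDV) wavelet basis, with regularity S.\<close>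
definition wavelet_basis :: "(nat \<Rightarrow> nat \<Rightarrow> real \<Rightarrow> real) \<Rightarrow> real \<Rightarrow> bool" where
  "wavelet_basis \<psi> S \<longleftrightarrow>
     (\<forall>l k. \<psi> l k \<in> borel_measurable lborel) \<and>
     (\<forall>l k. k < 2 ^ l \<longrightarrow> set_integrable lborel {0..1} (\<lambda>t. (\<psi> l k t)\<^sup>2)) \<and>
     \<comment> \<open>orthonormality in L2[0,1]\<close>
     (\<forall>l k l' k'. k < 2 ^ l \<longrightarrow> k' < 2 ^ l' \<longrightarrow>
        (LINT t:{0..1}|lborel. \<psi> l k t * \<psi> l' k' t) = (if (l, k) = (l', k') then 1 else 0)) \<and>
     \<comment> \<open>completeness in L2[0,1]\<close>
     (\<forall>g. g \<in> borel_measurable lborel \<longrightarrow> set_integrable lborel {0..1} (\<lambda>t. (g t)\<^sup>2) \<longrightarrow>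
        (\<forall>l k. k < 2 ^ l \<longrightarrow> (LINT t:{0..1}|lborel. g t * \<psi> l k t) = 0) \<longrightarrow>
        (AE t in lborel. t \<in> {0..1} \<longrightarrow> g t = 0)) \<and>
     (\<exists>C>0.
        \<comment> \<open>support of diameter \<lesssim> 2^-l\<close>
        (\<forall>l k. k < 2 ^ l \<longrightarrow> (\<exists>a b. b - a \<le> C * 2 powr (- real l) \<and>
            (\<forall>t\<in>{0..1}. \<psi> l k t \<noteq> 0 \<longrightarrow> t \<in> {a..b}))) \<and>
        \<comment> \<open>sup-norm bound\<close>
        (\<forall>l k. k < 2 ^ l \<longrightarrow> (\<forall>t\<in>{0..1}. \<bar>\<psi> l k t\<bar> \<le> C * 2 powr (real l / 2))) \<and>
        \<comment> \<open>bound on the sum over k of |psi_lk|\<close>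
        (\<forall>l. \<forall>t\<in>{0..1}. (\<Sum>k<2 ^ l. \<bar>\<psi> l k t\<bar>) \<le> C * 2 powr (real l / 2))) \<and>
     \<comment> \<open>regularity\<close>
     (\<forall>l k. k < 2 ^ l \<longrightarrow> holder01 S (\<psi> l k))"

definition wcoef :: "(nat \<Rightarrow> nat \<Rightarrow> real \<Rightarrow> real) \<Rightarrow> (real \<Rightarrow> real) \<Rightarrow> nat \<Rightarrow> nat \<Rightarrow> real" where
  "wcoef \<psi> f l k = (LINT t:{0..1}|lborel. f t * \<psi> l k t)"

definition wsynth :: "(nat \<Rightarrow> nat \<Rightarrow> real \<Rightarrow> real) \<Rightarrow> (nat \<times> nat \<Rightarrow> real) \<Rightarrow> real \<Rightarrow> real" where
  "wsynth \<psi> \<theta> t = (\<Sum>l. \<Sum>k<2 ^ l. \<theta> (l, k) * \<psi> l k t)"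

definition Linf_norm01 :: "(real \<Rightarrow> real) \<Rightarrow> ennreal" where
  "Linf_norm01 g = esssup (restrict_space lborel {0..1}) (\<lambda>t. ennreal \<bar>g t\<bar>)"

definition in_Linf01 :: "(real \<Rightarrow> real) \<Rightarrow> bool" where
  "in_Linf01 g \<longleftrightarrow> g \<in> borel_measurable lborel \<and> (\<exists>C. AE t in lborel. t \<in> {0..1} \<longrightarrow> \<bar>g t\<bar> \<le> C)"

definition unif_phi :: "real \<Rightarrow> real \<Rightarrow> real" where
  "unif_phi B x = (if x \<in> {-B..B} then 1 / (2 * B) else 0)"

definition sigma_l :: "real \<Rightarrow> nat \<Rightarrow> real" where
  "sigma_l \<alpha> l = 2 powr (- real l * (1/2 + \<alpha>))"

definition prior_dens :: "real \<Rightarrow> real \<Rightarrow> real \<Rightarrow> real" where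
  "prior_dens B \<sigma> x = unif_phi B (x / \<sigma>) / \<sigma>"

text \<open>Posterior of a single coefficient given the observation x = f_lk + n^(-1/2) eps_lk
  (Bayes formula: prior density times Gaussian likelihood, normalised).\<close>
definition post_coord :: "real \<Rightarrow> real \<Rightarrow> nat \<Rightarrow> real \<Rightarrow> real measure" where
  "post_coord B \<sigma> n x =
     density lborel (\<lambda>u. ennreal (prior_dens B \<sigma> u * exp (- real n * (x - u)\<^sup>2 / 2)) /
        (\<integral>\<^sup>+ v. ennreal (prior_dens B \<sigma> v * exp (- real n * (x - v)\<^sup>2 / 2)) \<partial>lborel))"

text \<open>Posterior Pi(. | X^(n)) on the coefficient sequence: under the product prior and the
  independent Gaussian sequence model it is the product of the coordinate posteriors.\<close>
definition posterior :: "real \<Rightarrow> real \<Rightarrow> nat \<Rightarrow> (nat \<times> nat \<Rightarrow> real) \<Rightarrow> (nat \<times> nat \<Rightarrow> real) measure" where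
  "posterior \<alpha> B n X = PiM wav_idx (\<lambda>(l, k). post_coord B (sigma_l \<alpha> l) n (X (l, k)))"

definition noise :: "(nat \<times> nat \<Rightarrow> real) measure" where
  "noise = PiM wav_idx (\<lambda>_. density lborel std_normal_density)"

definition observ :: "(nat \<Rightarrow> nat \<Rightarrow> real \<Rightarrow> real) \<Rightarrow> (real \<Rightarrow> real) \<Rightarrow> nat \<Rightarrow> (nat \<times> nat \<Rightarrow> real) \<Rightarrow> (nat \<times> nat \<Rightarrow> real)" where
  "observ \<psi> f0 n \<epsilon> = (\<lambda>(l, k). wcoef \<psi> f0 l k + \<epsilon> (l, k) / sqrt (real n))"

end

theory Submission
  imports Defs
begin

text \<open>Each coordinate posterior lives on \<open>[-B \<sigma>_l, B \<sigma>_l]\<close>. When the noise is small,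
  \<open>|\<epsilon>_lk| \<le> \<surd>n \<tau> / 4\<close>, it concentrates within \<open>\<tau>\<close> of \<open>f_0,lk\<close>: beyond that distance the
  likelihood is smaller by a factor \<open>exp (-c n \<tau>^2)\<close> than near the truth, and the true
  coefficient stays a margin \<open>(B - R) \<sigma>_l\<close> inside the prior support.
  Expanding \<open>f - f_0\<close> in the wavelet basis (completeness identifies \<open>f_0\<close> with its series)
  and using \<open>\<Sum>_k |\<psi>_lk| \<lesssim> 2^(l/2)\<close>, the sup-norm error is at most \<open>\<Sum>_(l<m) 2^(l/2) \<tau>\<close>
  for the levels below \<open>m\<close>, plus \<open>O(2^(-m\<alpha>))\<close> for the levels from \<open>m\<close> on (both \<open>f\<close> and
  \<open>f_0\<close> have coefficients of size at most \<open>B \<sigma>_l\<close>), plus the rare large deviations.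
  With \<open>\<tau> \<asymp> \<surd>(log n / n)\<close> and \<open>2^m \<asymp> (n / log n)^(1/(2\<alpha>+1))\<close> the first two terms are of
  order \<open>(log n / n)^(\<alpha>/(2\<alpha>+1))\<close>, while the Gaussian and posterior tails contribute
  \<open>O(n^(-3))\<close>.\<close>

section \<open>The posterior of a single coefficient\<close>

definition post_kernel :: "real \<Rightarrow> real \<Rightarrow> nat \<Rightarrow> real \<Rightarrow> real \<Rightarrow> real" where
  "post_kernel B \<sigma> n x u = prior_dens B \<sigma> u * exp (- real n * (x - u)\<^sup>2 / 2)"

definition post_normalizer :: "real \<Rightarrow> real \<Rightarrow> nat \<Rightarrow> real \<Rightarrow> real" where
  "post_normalizer B \<sigma> n x = enn2real (\<integral>\<^sup>+ v. ennreal (post_kernel B \<sigma> n x v) \<partial>lborel)"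

lemma prior_dens_eq:
  assumes "B > 0" "\<sigma> > 0"
  shows "prior_dens B \<sigma> u = (if \<bar>u\<bar> \<le> B * \<sigma> then 1 / (2 * B * \<sigma>) else 0)"
proof -
  have "(u / \<sigma> \<in> {-B..B}) = (\<bar>u\<bar> \<le> B * \<sigma>)"
    using assms by (auto simp: abs_le_iff field_simps)
  then show ?thesis using assms by (simp add: prior_dens_def unif_phi_def)
qed

lemma post_kernel_measurable [measurable]: "post_kernel B \<sigma> n x \<in> borel_measurable borel"
  unfolding post_kernel_def prior_dens_def unif_phi_def by measurable

lemma post_kernel_nonneg: "B > 0 \<Longrightarrow> \<sigma> > 0 \<Longrightarrow> post_kernel B \<sigma> n x u \<ge> 0"
  by (simp add: post_kernel_def prior_dens_eq)

lemma post_kernel_le_prior: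
  assumes "B > 0" "\<sigma> > 0"
  shows "post_kernel B \<sigma> n x u \<le> 1 / (2 * B * \<sigma>) * indicator {-(B * \<sigma>)..B * \<sigma>} u"
proof -
  have "exp (- real n * (x - u)\<^sup>2 / 2) \<le> 1" by simp
  then show ?thesis using assms
    by (auto simp: post_kernel_def prior_dens_eq indicator_def abs_le_iff intro!: divide_right_mono)
qed

lemma nn_integral_uniform_density:
  assumes "B > 0" "\<sigma> > 0"
  shows "(\<integral>\<^sup>+ u. ennreal (1 / (2 * B * \<sigma>) * indicator {-(B * \<sigma>)..B * \<sigma>} u) \<partial>lborel) = 1"
proof -
  have "(\<integral>\<^sup>+ u. ennreal (1 / (2 * B * \<sigma>) * indicator {-(B * \<sigma>)..B * \<sigma>} u) \<partial>lborel)
      = (\<integral>\<^sup>+ u. ennreal (1 / (2 * B * \<sigma>)) * indicator {-(B * \<sigma>)..B * \<sigma>} u \<partial>lborel)"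
    by (intro nn_integral_cong) (auto simp: indicator_def)
  also have "\<dots> = ennreal (1 / (2 * B * \<sigma>)) * ennreal (2 * B * \<sigma>)"
    using assms by (subst nn_integral_cmult) (auto simp: algebra_simps)
  also have "\<dots> = 1" using assms by (simp add: ennreal_mult'[symmetric])
  finally show ?thesis .
qed

lemma nn_integral_post_kernel_le_1:
  assumes "B > 0" "\<sigma> > 0"
  shows "(\<integral>\<^sup>+ v. ennreal (post_kernel B \<sigma> n x v) \<partial>lborel) \<le> 1"
proof -
  have "(\<integral>\<^sup>+ v. ennreal (post_kernel B \<sigma> n x v) \<partial>lborel)
     \<le> (\<integral>\<^sup>+ u. ennreal (1 / (2 * B * \<sigma>) * indicator {-(B * \<sigma>)..B * \<sigma>} u) \<partial>lborel)"
    by (intro nn_integral_mono ennreal_leI post_kernel_le_prior assms)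
  then show ?thesis using nn_integral_uniform_density[OF assms] by simp
qed

lemma nn_integral_post_kernel_lower:
  assumes "B > 0" "\<sigma> > 0" "s > 0" "\<bar>c\<bar> + s \<le> B * \<sigma>"
    and D: "\<And>u. \<bar>u - c\<bar> \<le> s \<Longrightarrow> real n * (x - u)\<^sup>2 / 2 \<le> D"
  shows "ennreal (s / (B * \<sigma>) * exp (- D)) \<le> (\<integral>\<^sup>+ v. ennreal (post_kernel B \<sigma> n x v) \<partial>lborel)"
proof -
  have "(\<integral>\<^sup>+ v. ennreal (1 / (2 * B * \<sigma>) * exp (- D)) * indicator {c - s..c + s} v \<partial>lborel)
      \<le> (\<integral>\<^sup>+ v. ennreal (post_kernel B \<sigma> n x v) \<partial>lborel)"
  proof (intro nn_integral_mono)
    fix v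
    show "ennreal (1 / (2 * B * \<sigma>) * exp (- D)) * indicator {c - s..c + s} v
        \<le> ennreal (post_kernel B \<sigma> n x v)"
    proof (cases "v \<in> {c - s..c + s}")
      case True
      then have v: "\<bar>v - c\<bar> \<le> s" by auto
      then have "\<bar>v\<bar> \<le> B * \<sigma>" using assms(4) by linarith
      moreover have "exp (- D) \<le> exp (- real n * (x - v)\<^sup>2 / 2)" using D[OF v] by simp
      ultimately show ?thesis using True assms
        by (auto simp: post_kernel_def prior_dens_eq intro!: ennreal_leI divide_right_mono)
    qed simp
  qed
  moreover have "(\<integral>\<^sup>+ v. ennreal (1 / (2 * B * \<sigma>) * exp (- D)) * indicator {c - s..c + s} v \<partial>lborel)
      = ennreal (s / (B * \<sigma>) * exp (- D))"
    using assms by (subst nn_integral_cmult) (auto simp: ennreal_mult'[symmetric])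
  ultimately show ?thesis by simp
qed

lemma nn_integral_post_kernel_eq:
  assumes "B > 0" "\<sigma> > 0"
  shows "(\<integral>\<^sup>+ v. ennreal (post_kernel B \<sigma> n x v) \<partial>lborel) = ennreal (post_normalizer B \<sigma> n x)"
proof -
  have "(\<integral>\<^sup>+ v. ennreal (post_kernel B \<sigma> n x v) \<partial>lborel) < \<top>"
    using nn_integral_post_kernel_le_1[OF assms, of n x] by (simp add: order_le_less_trans)
  then show ?thesis unfolding post_normalizer_def by (simp add: ennreal_enn2real_if)
qed

lemma post_normalizer_pos:
  assumes "B > 0" "\<sigma> > 0"
  shows "post_normalizer B \<sigma> n x > 0"
proof -
  have "ennreal (B * \<sigma> / (B * \<sigma>) * exp (- (real n * (\<bar>x\<bar> + B * \<sigma>)\<^sup>2 / 2)))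
      \<le> (\<integral>\<^sup>+ v. ennreal (post_kernel B \<sigma> n x v) \<partial>lborel)"
  proof (rule nn_integral_post_kernel_lower[where c = 0])
    fix u assume "\<bar>u - 0\<bar> \<le> B * \<sigma>"
    then have "\<bar>x - u\<bar> \<le> \<bar>x\<bar> + B * \<sigma>" by linarith
    then have "(x - u)\<^sup>2 \<le> (\<bar>x\<bar> + B * \<sigma>)\<^sup>2"
      by (metis abs_ge_zero power2_abs power_mono)
    then show "real n * (x - u)\<^sup>2 / 2 \<le> real n * (\<bar>x\<bar> + B * \<sigma>)\<^sup>2 / 2"
      by (intro divide_right_mono mult_left_mono) auto
  qed (use assms in auto)
  then have "0 < (\<integral>\<^sup>+ v. ennreal (post_kernel B \<sigma> n x v) \<partial>lborel)"
    using assms by (auto elim!: less_le_trans[rotated])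
  then show ?thesis using nn_integral_post_kernel_eq[OF assms] by simp
qed

lemma post_coord_eq_density:
  assumes "B > 0" "\<sigma> > 0"
  shows "post_coord B \<sigma> n x
    = density lborel (\<lambda>u. ennreal (post_kernel B \<sigma> n x u / post_normalizer B \<sigma> n x))"
proof -
  have "post_coord B \<sigma> n x
      = density lborel (\<lambda>u. ennreal (post_kernel B \<sigma> n x u) / ennreal (post_normalizer B \<sigma> n x))"
    unfolding post_coord_def nn_integral_post_kernel_eq[OF assms, symmetric] post_kernel_def ..
  also have "\<dots> = density lborel (\<lambda>u. ennreal (post_kernel B \<sigma> n x u / post_normalizer B \<sigma> n x))"
    using post_normalizer_pos[OF assms] post_kernel_nonneg[OF assms] by (simp add: divide_ennreal)
  finally show ?thesis .
qed

lemma prob_space_post_coord: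
  assumes "B > 0" "\<sigma> > 0"
  shows "prob_space (post_coord B \<sigma> n x)"
proof
  define z where "z = post_normalizer B \<sigma> n x"
  have z: "z > 0" unfolding z_def by (rule post_normalizer_pos[OF assms])
  have "emeasure (post_coord B \<sigma> n x) (space (post_coord B \<sigma> n x))
     = (\<integral>\<^sup>+ u. ennreal (post_kernel B \<sigma> n x u) * ennreal (1 / z) \<partial>lborel)"
    unfolding post_coord_eq_density[OF assms] z_def[symmetric] using z post_kernel_nonneg[OF assms]
    by (simp add: emeasure_density ennreal_mult'[symmetric])
  also have "\<dots> = ennreal z * ennreal (1 / z)"
    by (subst nn_integral_multc) (auto simp: nn_integral_post_kernel_eq[OF assms] z_def)
  also have "\<dots> = 1" using z by (simp add: ennreal_mult'[symmetric])
  finally show "emeasure (post_coord B \<sigma> n x) (space (post_coord B \<sigma> n x)) = 1" .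
qed

lemma sets_post_coord [simp, measurable_cong]: "sets (post_coord B \<sigma> n x) = sets borel"
  by (simp add: post_coord_def)

lemma AE_post_coord_support:
  assumes "B > 0" "\<sigma> > 0"
  shows "AE u in post_coord B \<sigma> n x. \<bar>u\<bar> \<le> B * \<sigma>"
  unfolding post_coord_eq_density[OF assms]
  by (subst AE_density) (auto simp: post_kernel_def prior_dens_eq[OF assms])

lemma nn_integral_post_coord_le:
  assumes "B > 0" "\<sigma> > 0" "h \<in> borel_measurable borel"
    and "\<And>u. \<bar>u\<bar> \<le> B * \<sigma> \<Longrightarrow> h u \<le> K"
  shows "(\<integral>\<^sup>+ u. ennreal (h u) \<partial>post_coord B \<sigma> n x) \<le> ennreal K"
proof -
  interpret prob_space "post_coord B \<sigma> n x" by (rule prob_space_post_coord[OF assms(1,2)])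
  have "(\<integral>\<^sup>+ u. ennreal (h u) \<partial>post_coord B \<sigma> n x) \<le> (\<integral>\<^sup>+ u. ennreal K \<partial>post_coord B \<sigma> n x)"
    using AE_post_coord_support[OF assms(1,2), of n x]
    by (intro nn_integral_mono_AE) (auto elim!: eventually_mono intro: assms(4) ennreal_leI)
  also have "\<dots> = ennreal K" by (simp add: emeasure_space_1)
  finally show ?thesis .
qed

definition large_dev :: "real \<Rightarrow> real \<Rightarrow> real \<Rightarrow> real" where
  "large_dev c \<tau> u = (if \<tau> < \<bar>u - c\<bar> then \<bar>u - c\<bar> else 0)"

lemma large_dev_measurable [measurable]: "large_dev c \<tau> \<in> borel_measurable borel"
  unfolding large_dev_def by measurable

lemma large_dev_nonneg: "large_dev c \<tau> u \<ge> 0"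
  by (simp add: large_dev_def)

lemma abs_diff_le_large_dev: "0 \<le> \<tau> \<Longrightarrow> \<bar>u - c\<bar> \<le> \<tau> + large_dev c \<tau> u"
  by (simp add: large_dev_def)

lemma post_normalizer_lower:
  assumes B: "B > 0" and \<sigma>: "\<sigma> > 0" and c: "\<bar>c\<bar> \<le> R * \<sigma>" and s: "0 < s" "s \<le> \<tau> / 4" "s \<le> (B - R) * \<sigma>"
    and x: "\<bar>x - c\<bar> \<le> \<tau> / 4"
  shows "s / (B * \<sigma>) * exp (- (real n * \<tau>\<^sup>2 / 8)) \<le> post_normalizer B \<sigma> n x"
proof -
  have "ennreal (s / (B * \<sigma>) * exp (- (real n * \<tau>\<^sup>2 / 8)))
      \<le> (\<integral>\<^sup>+ v. ennreal (post_kernel B \<sigma> n x v) \<partial>lborel)"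
  proof (rule nn_integral_post_kernel_lower[OF B \<sigma> s(1)])
    show "\<bar>c\<bar> + s \<le> B * \<sigma>" using c s by (simp add: algebra_simps)
    fix u assume "\<bar>u - c\<bar> \<le> s"
    then have "\<bar>x - u\<bar> \<le> \<tau> / 2" using x s by linarith
    then have "(x - u)\<^sup>2 \<le> (\<tau> / 2)\<^sup>2"
      by (metis abs_ge_zero power2_abs power_mono)
    then have "real n * (x - u)\<^sup>2 \<le> real n * (\<tau> / 2)\<^sup>2" by (intro mult_left_mono) auto
    then show "real n * (x - u)\<^sup>2 / 2 \<le> real n * \<tau>\<^sup>2 / 8" by (simp add: power2_eq_square)
  qed
  then show ?thesis
    unfolding nn_integral_post_kernel_eq[OF B \<sigma>]
    using post_normalizer_pos[OF B \<sigma>, of n x] by (simp add: ennreal_le_iff)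
qed

lemma post_kernel_mult_large_dev_le:
  assumes B: "B > 0" and \<sigma>: "\<sigma> > 0" and RB: "R < B" and c: "\<bar>c\<bar> \<le> R * \<sigma>" and \<tau>: "\<tau> > 0"
    and x: "\<bar>x - c\<bar> \<le> \<tau> / 4"
  shows "post_kernel B \<sigma> n x u * large_dev c \<tau> u
    \<le> exp (- 9 * real n * \<tau>\<^sup>2 / 32) * indicator {-(B * \<sigma>)..B * \<sigma>} u"
proof (cases "\<bar>u\<bar> \<le> B * \<sigma> \<and> \<tau> < \<bar>u - c\<bar>")
  case True
  then have u: "\<bar>u\<bar> \<le> B * \<sigma>" and far: "\<tau> < \<bar>u - c\<bar>" by auto
  have "R * \<sigma> \<le> B * \<sigma>" using RB \<sigma> by simp
  then have dev_le: "large_dev c \<tau> u \<le> 2 * B * \<sigma>"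
    using u c far by (simp add: large_dev_def)
  have "3 * \<tau> / 4 \<le> \<bar>x - u\<bar>" using far x by linarith
  then have "(3 * \<tau> / 4)\<^sup>2 \<le> (x - u)\<^sup>2" using \<tau>
    by (metis abs_ge_zero power2_abs power_mono less_imp_le zero_le_divide_iff
        zero_le_mult_iff zero_le_numeral)
  then have "real n * (3 * \<tau> / 4)\<^sup>2 \<le> real n * (x - u)\<^sup>2" by (intro mult_left_mono) auto
  then have lik: "exp (- real n * (x - u)\<^sup>2 / 2) \<le> exp (- 9 * real n * \<tau>\<^sup>2 / 32)"
    by (simp add: power2_eq_square algebra_simps)
  have "post_kernel B \<sigma> n x u * large_dev c \<tau> u
      = exp (- real n * (x - u)\<^sup>2 / 2) * (large_dev c \<tau> u / (2 * B * \<sigma>))"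
    using u B \<sigma> by (simp add: post_kernel_def prior_dens_eq)
  also have "\<dots> \<le> exp (- 9 * real n * \<tau>\<^sup>2 / 32) * 1"
    using B \<sigma> lik dev_le large_dev_nonneg[of c \<tau> u] by (intro mult_mono) auto
  finally show ?thesis using u by (simp add: abs_le_iff)
next
  case False
  then have "post_kernel B \<sigma> n x u = 0 \<or> large_dev c \<tau> u = 0"
    using B \<sigma> by (auto simp: post_kernel_def prior_dens_eq large_dev_def)
  then show ?thesis by auto
qed

text \<open>If the observation \<open>x\<close> is within \<open>\<tau>/4\<close> of the truth \<open>c\<close>, the posterior mass beyond
  distance \<open>\<tau>\<close> from \<open>c\<close> is exponentially small: there the likelihood is below
  \<open>exp (-9n\<tau>\<^sup>2/32)\<close>, whereas the normalizer is at least \<open>exp (-n\<tau>\<^sup>2/8)\<close> times the prior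
  mass of a window of radius \<open>min (\<tau>/4) ((B - R)\<sigma>)\<close> around \<open>c\<close>.\<close>
lemma post_coord_large_dev_le:
  assumes B: "B > 0" and \<sigma>: "\<sigma> > 0" and RB: "R < B" and c: "\<bar>c\<bar> \<le> R * \<sigma>" and \<tau>: "\<tau> > 0"
    and x: "\<bar>x - c\<bar> \<le> \<tau> / 4"
  shows "(\<integral>\<^sup>+ u. ennreal (large_dev c \<tau> u) \<partial>post_coord B \<sigma> n x)
     \<le> ennreal (2 * (B * \<sigma>)\<^sup>2 / min (\<tau> / 4) ((B - R) * \<sigma>) * exp (- 5 * real n * \<tau>\<^sup>2 / 32))"
proof -
  define s where "s = min (\<tau> / 4) ((B - R) * \<sigma>)"
  define z where "z = post_normalizer B \<sigma> n x"
  define E where "E = exp (- 9 * real n * \<tau>\<^sup>2 / 32)"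
  have s: "s > 0" using \<tau> RB \<sigma> by (simp add: s_def)
  have z: "z > 0" using post_normalizer_pos[OF B \<sigma>] by (simp add: z_def)
  have z_lower: "s / (B * \<sigma>) * exp (- (real n * \<tau>\<^sup>2 / 8)) \<le> z"
    unfolding z_def using s by (intro post_normalizer_lower[OF B \<sigma> c _ _ _ x]) (auto simp: s_def)
  have "(\<integral>\<^sup>+ u. ennreal (large_dev c \<tau> u) \<partial>post_coord B \<sigma> n x)
      = (\<integral>\<^sup>+ u. ennreal (post_kernel B \<sigma> n x u * large_dev c \<tau> u / z) \<partial>lborel)"
    unfolding post_coord_eq_density[OF B \<sigma>] z_def[symmetric] using z post_kernel_nonneg[OF B \<sigma>]
    by (subst nn_integral_density) (auto simp: ennreal_mult'[symmetric] large_dev_nonneg intro!: nn_integral_cong)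
  also have "\<dots> \<le> (\<integral>\<^sup>+ u. ennreal (E * indicator {-(B * \<sigma>)..B * \<sigma>} u / z) \<partial>lborel)"
    using post_kernel_mult_large_dev_le[OF B \<sigma> RB c \<tau> x] z
    by (intro nn_integral_mono ennreal_leI divide_right_mono) (auto simp: E_def)
  also have "\<dots> = (\<integral>\<^sup>+ u. ennreal (E / z) * indicator {-(B * \<sigma>)..B * \<sigma>} u \<partial>lborel)"
    by (intro nn_integral_cong) (simp add: indicator_def)
  also have "\<dots> = ennreal (2 * B * \<sigma> * E / z)"
    using B \<sigma> z by (simp add: nn_integral_cmult_indicator ennreal_mult'[symmetric] E_def)
  also have "\<dots> \<le> ennreal (2 * (B * \<sigma>)\<^sup>2 / s * exp (- 5 * real n * \<tau>\<^sup>2 / 32))"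
  proof (rule ennreal_leI)
    have "2 * B * \<sigma> * E / z \<le> 2 * B * \<sigma> * E / (s / (B * \<sigma>) * exp (- (real n * \<tau>\<^sup>2 / 8)))"
      using z_lower z s B \<sigma> by (intro divide_left_mono) (auto simp: E_def)
    also have "\<dots> = 2 * (B * \<sigma>)\<^sup>2 / s * (E * exp (real n * \<tau>\<^sup>2 / 8))"
      using s B \<sigma> by (simp add: field_simps power2_eq_square exp_minus)
    also have "E * exp (real n * \<tau>\<^sup>2 / 8) = exp (- 5 * real n * \<tau>\<^sup>2 / 32)"
      unfolding E_def by (simp add: exp_add[symmetric] algebra_simps)
    finally show "2 * B * \<sigma> * E / z \<le> 2 * (B * \<sigma>)\<^sup>2 / s * exp (- 5 * real n * \<tau>\<^sup>2 / 32)" .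
  qed
  finally show ?thesis by (simp add: s_def)
qed

definition dev_bound :: "real \<Rightarrow> real \<Rightarrow> real \<Rightarrow> nat \<Rightarrow> real \<Rightarrow> real \<Rightarrow> real" where
  "dev_bound B R \<tau> n \<sigma> e = 2 * B * \<sigma> * indicator {e. sqrt (real n) * \<tau> / 4 < \<bar>e\<bar>} e
     + 2 * (B * \<sigma>)\<^sup>2 / min (\<tau> / 4) ((B - R) * \<sigma>) * exp (- 5 * real n * \<tau>\<^sup>2 / 32)"

lemma dev_bound_measurable [measurable]: "dev_bound B R \<tau> n \<sigma> \<in> borel_measurable borel"
  unfolding dev_bound_def by measurable

lemma dev_bound_nonneg: "R < B \<Longrightarrow> R \<ge> 0 \<Longrightarrow> \<sigma> > 0 \<Longrightarrow> \<tau> > 0 \<Longrightarrow> dev_bound B R \<tau> n \<sigma> e \<ge> 0"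
  unfolding dev_bound_def by (intro add_nonneg_nonneg) auto

text \<open>For the observation \<open>c + e/\<surd>n\<close>: either the noise is small and the previous lemma
  applies, or one pays the trivial bound \<open>2B\<sigma>\<close> on the event \<open>|e| > \<surd>n \<tau>/4\<close>.\<close>
lemma post_coord_large_dev_noise_le:
  assumes RB: "R < B" and R: "R \<ge> 0" and \<sigma>: "\<sigma> > 0" and c: "\<bar>c\<bar> \<le> R * \<sigma>" and \<tau>: "\<tau> > 0"
    and n: "n > 0"
  shows "(\<integral>\<^sup>+ u. ennreal (large_dev c \<tau> u) \<partial>post_coord B \<sigma> n (c + e / sqrt (real n)))
     \<le> ennreal (dev_bound B R \<tau> n \<sigma> e)"
proof -
  let ?ind = "indicator {e. sqrt (real n) * \<tau> / 4 < \<bar>e\<bar>} e :: real"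
  let ?tail = "2 * (B * \<sigma>)\<^sup>2 / min (\<tau> / 4) ((B - R) * \<sigma>) * exp (- 5 * real n * \<tau>\<^sup>2 / 32)"
  have B: "B > 0" using RB R by simp
  have tail: "?tail \<ge> 0" using B \<sigma> \<tau> RB by simp
  have ind: "0 \<le> 2 * B * \<sigma> * ?ind" using B \<sigma> by simp
  have sn: "sqrt (real n) > 0" using n by simp
  have "(\<integral>\<^sup>+ u. ennreal (large_dev c \<tau> u) \<partial>post_coord B \<sigma> n (c + e / sqrt (real n)))
      \<le> ennreal (2 * B * \<sigma> * ?ind + ?tail)"
  proof (cases "\<bar>e\<bar> / sqrt (real n) \<le> \<tau> / 4")
    case True
    then have "\<bar>c + e / sqrt (real n) - c\<bar> \<le> \<tau> / 4" by (simp add: abs_divide)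
    then have "(\<integral>\<^sup>+ u. ennreal (large_dev c \<tau> u) \<partial>post_coord B \<sigma> n (c + e / sqrt (real n)))
        \<le> ennreal ?tail"
      by (rule post_coord_large_dev_le[OF B \<sigma> RB c \<tau>])
    also have "\<dots> \<le> ennreal (2 * B * \<sigma> * ?ind + ?tail)" using ind by (intro ennreal_leI) simp
    finally show ?thesis .
  next
    case False
    then have "sqrt (real n) * \<tau> / 4 < \<bar>e\<bar>" using sn by (simp add: field_simps)
    then have ind1: "?ind = 1" by simp
    have "(\<integral>\<^sup>+ u. ennreal (large_dev c \<tau> u) \<partial>post_coord B \<sigma> n (c + e / sqrt (real n)))
        \<le> ennreal (2 * B * \<sigma>)"
    proof (rule nn_integral_post_coord_le[OF B \<sigma>])
      fix u assume "\<bar>u\<bar> \<le> B * \<sigma>"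
      moreover have "R * \<sigma> \<le> B * \<sigma>" using RB \<sigma> by simp
      ultimately have "\<bar>u - c\<bar> \<le> 2 * B * \<sigma>" using c by linarith
      then show "large_dev c \<tau> u \<le> 2 * B * \<sigma>" using B \<sigma> by (simp add: large_dev_def)
    qed simp
    also have "\<dots> \<le> ennreal (2 * B * \<sigma> * ?ind + ?tail)"
      unfolding ind1 using tail by (intro ennreal_leI) simp
    finally show ?thesis .
  qed
  then show ?thesis by (simp only: dev_bound_def)
qed

section \<open>A Gaussian tail bound\<close>

lemma prob_space_std_normal: "prob_space (density lborel std_normal_density)"
  by (rule prob_space_normal_density) simp

text \<open>Comparison with the \<open>N(0, 2)\<close> density: \<open>exp (-e\<^sup>2/2) \<le> exp (-u\<^sup>2/4) exp (-e\<^sup>2/4)\<close>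
  for \<open>|e| > u\<close>.\<close>
lemma std_normal_tail_le:
  assumes "u \<ge> 0"
  shows "(\<integral>\<^sup>+ e. indicator {e. u < \<bar>e\<bar>} e \<partial>density lborel std_normal_density)
     \<le> ennreal (sqrt 2 * exp (- u\<^sup>2 / 4))"
proof -
  have normal2: "(\<integral>\<^sup>+ x. ennreal (normal_density 0 (sqrt 2) x) \<partial>lborel) = 1"
  proof -
    interpret prob_space "density lborel (normal_density 0 (sqrt 2))"
      by (rule prob_space_normal_density) simp
    show ?thesis using emeasure_space_1 by (simp add: emeasure_density)
  qed
  have density_le: "ennreal (std_normal_density e) * indicator {e. u < \<bar>e\<bar>} e
      \<le> ennreal (sqrt 2 * exp (- u\<^sup>2 / 4)) * ennreal (normal_density 0 (sqrt 2) e)" for e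
  proof (cases "u < \<bar>e\<bar>")
    case True
    then have "u\<^sup>2 \<le> e\<^sup>2" using assms
      by (metis abs_ge_zero power2_abs power_mono less_imp_le)
    then have "exp (- e\<^sup>2 / 2) \<le> exp (- u\<^sup>2 / 4) * exp (- e\<^sup>2 / 4)"
      by (simp add: exp_add[symmetric])
    moreover have "sqrt (2 * pi * (sqrt 2)\<^sup>2) = sqrt 2 * sqrt (2 * pi)"
      by (simp add: real_sqrt_mult[symmetric])
    ultimately have "std_normal_density e \<le> sqrt 2 * exp (- u\<^sup>2 / 4) * normal_density 0 (sqrt 2) e"
      unfolding std_normal_density_def normal_density_def by (simp add: field_simps)
    then show ?thesis using True by (simp add: ennreal_mult'[symmetric] ennreal_leI)
  qed simp
  have "(\<integral>\<^sup>+ e. indicator {e. u < \<bar>e\<bar>} e \<partial>density lborel std_normal_density)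
      = (\<integral>\<^sup>+ e. ennreal (std_normal_density e) * indicator {e. u < \<bar>e\<bar>} e \<partial>lborel)"
    by (subst nn_integral_density) auto
  also have "\<dots> \<le> (\<integral>\<^sup>+ e. ennreal (sqrt 2 * exp (- u\<^sup>2 / 4)) * ennreal (normal_density 0 (sqrt 2) e) \<partial>lborel)"
    by (intro nn_integral_mono density_le)
  also have "\<dots> = ennreal (sqrt 2 * exp (- u\<^sup>2 / 4))"
    by (subst nn_integral_cmult) (auto simp: normal2)
  finally show ?thesis .
qed

lemma std_normal_expectation_tail_le:
  assumes "u \<ge> 0" "a \<ge> 0" "b \<ge> 0"
  shows "(\<integral>\<^sup>+ e. ennreal (a * indicator {e. u < \<bar>e\<bar>} e + b) \<partial>density lborel std_normal_density)
     \<le> ennreal (a * sqrt 2 * exp (- u\<^sup>2 / 4) + b)"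
proof -
  interpret prob_space "density lborel std_normal_density" by (rule prob_space_std_normal)
  have "(\<integral>\<^sup>+ e. ennreal (a * indicator {e. u < \<bar>e\<bar>} e + b) \<partial>density lborel std_normal_density)
    = (\<integral>\<^sup>+ e. ennreal a * indicator {e. u < \<bar>e\<bar>} e + ennreal b \<partial>density lborel std_normal_density)"
    using assms by (intro nn_integral_cong) (auto simp: indicator_def)
  also have "\<dots> = ennreal a * (\<integral>\<^sup>+ e. indicator {e. u < \<bar>e\<bar>} e \<partial>density lborel std_normal_density)
      + ennreal b"
    using emeasure_space_1 by (subst nn_integral_add) (auto simp: nn_integral_cmult)
  also have "\<dots> \<le> ennreal a * ennreal (sqrt 2 * exp (- u\<^sup>2 / 4)) + ennreal b"
    by (intro add_mono mult_left_mono std_normal_tail_le assms) auto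
  also have "\<dots> = ennreal (a * sqrt 2 * exp (- u\<^sup>2 / 4) + b)"
    using assms by (simp add: ennreal_mult'[symmetric] mult.assoc)
  finally show ?thesis .
qed

definition coord_error :: "real \<Rightarrow> real \<Rightarrow> real \<Rightarrow> nat \<Rightarrow> real \<Rightarrow> real" where
  "coord_error B R \<tau> n \<sigma> = 2 * B * \<sigma> * sqrt 2 * exp (- (sqrt (real n) * \<tau> / 4)\<^sup>2 / 4)
     + 2 * (B * \<sigma>)\<^sup>2 / min (\<tau> / 4) ((B - R) * \<sigma>) * exp (- 5 * real n * \<tau>\<^sup>2 / 32)"

lemma coord_error_nonneg: "R < B \<Longrightarrow> R \<ge> 0 \<Longrightarrow> \<sigma> > 0 \<Longrightarrow> \<tau> > 0 \<Longrightarrow> coord_error B R \<tau> n \<sigma> \<ge> 0"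
  unfolding coord_error_def by (intro add_nonneg_nonneg) auto

lemma std_normal_dev_bound_le:
  assumes "R < B" "R \<ge> 0" "\<sigma> > 0" "\<tau> > 0"
  shows "(\<integral>\<^sup>+ e. ennreal (dev_bound B R \<tau> n \<sigma> e) \<partial>density lborel std_normal_density)
    \<le> ennreal (coord_error B R \<tau> n \<sigma>)"
  unfolding dev_bound_def coord_error_def using assms
  by (intro std_normal_expectation_tail_le) auto

lemma nn_integral_PiM_component:
  assumes M: "\<And>i. i \<in> I \<Longrightarrow> prob_space (M i)" and i: "i \<in> I"
    and g: "g \<in> borel_measurable (M i)"
  shows "(\<integral>\<^sup>+ \<theta>. g (\<theta> i) \<partial>PiM I M) = (\<integral>\<^sup>+ u. g u \<partial>M i)"
proof -
  have D: "distr (PiM I M) (M i) (\<lambda>\<omega>. \<omega> i) = M i" by (rule distr_PiM_component[OF M i])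
  have "(\<integral>\<^sup>+ \<theta>. g (\<theta> i) \<partial>PiM I M) = (\<integral>\<^sup>+ u. g u \<partial>distr (PiM I M) (M i) (\<lambda>\<omega>. \<omega> i))"
    by (rule nn_integral_distr[symmetric]) (use i g in \<open>auto simp: D\<close>)
  then show ?thesis by (simp only: D)
qed

lemma (in prob_space) nn_integral_add_sum_sum:
  fixes f :: "'i \<Rightarrow> 'j \<Rightarrow> 'a \<Rightarrow> ennreal"
  assumes "\<And>i j. i \<in> I \<Longrightarrow> j \<in> J i \<Longrightarrow> f i j \<in> borel_measurable M"
  shows "(\<integral>\<^sup>+ x. a + (\<Sum>i\<in>I. \<Sum>j\<in>J i. f i j x) \<partial>M) = a + (\<Sum>i\<in>I. \<Sum>j\<in>J i. \<integral>\<^sup>+ x. f i j x \<partial>M)"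
proof -
  have "(\<integral>\<^sup>+ x. a + (\<Sum>i\<in>I. \<Sum>j\<in>J i. f i j x) \<partial>M)
      = (\<integral>\<^sup>+ x. a \<partial>M) + (\<integral>\<^sup>+ x. (\<Sum>i\<in>I. \<Sum>j\<in>J i. f i j x) \<partial>M)"
    using assms by (intro nn_integral_add) auto
  also have "(\<integral>\<^sup>+ x. (\<Sum>i\<in>I. \<Sum>j\<in>J i. f i j x) \<partial>M) = (\<Sum>i\<in>I. \<Sum>j\<in>J i. \<integral>\<^sup>+ x. f i j x \<partial>M)"
    using assms by (simp add: nn_integral_sum borel_measurable_sum)
  finally show ?thesis by (simp add: emeasure_space_1)
qed

lemma ennreal_add_sum_sum:
  fixes f :: "'i \<Rightarrow> 'j \<Rightarrow> real"
  assumes "a \<ge> 0" "\<And>i j. f i j \<ge> 0"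
  shows "ennreal (a + (\<Sum>i\<in>I. \<Sum>j\<in>J i. f i j)) = ennreal a + (\<Sum>i\<in>I. \<Sum>j\<in>J i. ennreal (f i j))"
  using assms by (simp add: ennreal_plus sum_nonneg sum_ennreal)

section \<open>Wavelet series with geometrically decaying coefficients\<close>

definition wcoefs :: "(nat \<Rightarrow> nat \<Rightarrow> real \<Rightarrow> real) \<Rightarrow> (real \<Rightarrow> real) \<Rightarrow> nat \<times> nat \<Rightarrow> real" where
  "wcoefs \<psi> f = (\<lambda>(l, k). wcoef \<psi> f l k)"

lemma wcoefs_apply [simp]: "wcoefs \<psi> f (l, k) = wcoef \<psi> f l k"
  by (simp add: wcoefs_def)

lemma sigma_l_pos: "sigma_l \<alpha> l > 0"
  by (simp add: sigma_l_def)

lemma sigma_l_le_1: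
  assumes "0 \<le> \<alpha>"
  shows "sigma_l \<alpha> l \<le> 1"
proof -
  have "- real l * (1/2 + \<alpha>) \<le> 0" using assms by (simp add: mult_nonneg_nonneg)
  then show ?thesis using powr_mono[of "- real l * (1/2 + \<alpha>)" 0 2] by (simp add: sigma_l_def)
qed

lemma sigma_l_mult_two_powr: "sigma_l \<alpha> l * 2 powr (real l / 2) = (2 powr (- \<alpha>)) ^ l"
proof -
  have "sigma_l \<alpha> l * 2 powr (real l / 2) = 2 powr (- \<alpha> * real l)"
    unfolding sigma_l_def by (simp add: powr_add[symmetric] algebra_simps)
  also have "\<dots> = (2 powr (- \<alpha>)) powr real l" by (simp add: powr_powr)
  finally show ?thesis by (simp add: powr_realpow)
qed

lemma set_integrable_01_bounded:
  fixes g :: "real \<Rightarrow> real"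
  assumes "g \<in> borel_measurable lborel" "AE t in lborel. t \<in> {0..1} \<longrightarrow> \<bar>g t\<bar> \<le> K"
  shows "integrable lborel (\<lambda>t. indicator {0..1} t * g t)"
proof (rule Bochner_Integration.integrable_bound)
  show "integrable lborel (\<lambda>t. K * indicator {0..1::real} t)"
    by (intro integrable_mult_right integrable_real_indicator) auto
  show "(\<lambda>t. indicator {0..1} t * g t) \<in> borel_measurable lborel" using assms(1) by measurable
  show "AE t in lborel. norm (indicator {0..1} t * g t) \<le> norm (K * indicator {0..1::real} t)"
    using assms(2) by eventually_elim (auto simp: indicator_def)
qed

locale bounded_wavelet_basis =
  fixes \<psi> :: "nat \<Rightarrow> nat \<Rightarrow> real \<Rightarrow> real" and C \<alpha> :: real
  assumes psi_measurable [measurable]: "\<And>l k. \<psi> l k \<in> borel_measurable lborel"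
    and orthonormal: "\<And>l k l' k'. k < 2 ^ l \<Longrightarrow> k' < 2 ^ l' \<Longrightarrow>
        (LINT t:{0..1}|lborel. \<psi> l k t * \<psi> l' k' t) = (if (l, k) = (l', k') then 1 else 0)"
    and complete: "\<And>g. g \<in> borel_measurable lborel \<Longrightarrow> set_integrable lborel {0..1} (\<lambda>t. (g t)\<^sup>2) \<Longrightarrow>
        (\<forall>l k. k < 2 ^ l \<longrightarrow> (LINT t:{0..1}|lborel. g t * \<psi> l k t) = 0) \<Longrightarrow>
        (AE t in lborel. t \<in> {0..1} \<longrightarrow> g t = 0)"
    and C_pos: "C > 0"
    and abs_psi_le: "\<And>l k t. k < 2 ^ l \<Longrightarrow> t \<in> {0..1} \<Longrightarrow> \<bar>\<psi> l k t\<bar> \<le> C * 2 powr (real l / 2)"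
    and sum_abs_psi_le: "\<And>l t. t \<in> {0..1} \<Longrightarrow> (\<Sum>k<2 ^ l. \<bar>\<psi> l k t\<bar>) \<le> C * 2 powr (real l / 2)"
    and alpha_pos: "\<alpha> > 0"

lemma wavelet_basis_obtain_bounds:
  assumes "wavelet_basis \<psi> S" "\<alpha> > 0"
  obtains C where "bounded_wavelet_basis \<psi> C \<alpha>"
proof -
  from assms(1) obtain C where "C > 0"
    and "\<forall>l k. k < 2 ^ l \<longrightarrow> (\<forall>t\<in>{0..1}. \<bar>\<psi> l k t\<bar> \<le> C * 2 powr (real l / 2))"
    and "\<forall>l. \<forall>t\<in>{0..1}. (\<Sum>k<2 ^ l. \<bar>\<psi> l k t\<bar>) \<le> C * 2 powr (real l / 2)"
    unfolding wavelet_basis_def by blast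
  with assms have "bounded_wavelet_basis \<psi> C \<alpha>"
    by unfold_locales (simp_all add: wavelet_basis_def)
  then show thesis by (rule that)
qed

context bounded_wavelet_basis
begin

definition q :: real where
  "q = 2 powr (- \<alpha>)"

definition coef_ball :: "real \<Rightarrow> (nat \<times> nat \<Rightarrow> real) \<Rightarrow> bool" where
  "coef_ball A \<theta> \<longleftrightarrow> (\<forall>l k. k < 2 ^ l \<longrightarrow> \<bar>\<theta> (l, k)\<bar> \<le> A * sigma_l \<alpha> l)"

definition level :: "(nat \<times> nat \<Rightarrow> real) \<Rightarrow> nat \<Rightarrow> real \<Rightarrow> real" where
  "level \<theta> l t = (\<Sum>k<2 ^ l. \<theta> (l, k) * \<psi> l k t)"

definition partial_synth :: "(nat \<times> nat \<Rightarrow> real) \<Rightarrow> nat \<Rightarrow> real \<Rightarrow> real" where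
  "partial_synth \<theta> L t = (\<Sum>l<L. level \<theta> l t)"

lemma q_pos: "q > 0"
  by (simp add: q_def)

lemma q_less_1: "q < 1"
  using powr_less_mono[of "- \<alpha>" 0 2] alpha_pos by (simp add: q_def)

lemma sigma_l_mult_weight: "sigma_l \<alpha> l * 2 powr (real l / 2) = q ^ l"
  unfolding q_def by (rule sigma_l_mult_two_powr)

lemma level_measurable [measurable]: "level \<theta> l \<in> borel_measurable lborel"
  unfolding level_def by measurable

lemma partial_synth_measurable [measurable]: "partial_synth \<theta> L \<in> borel_measurable lborel"
  unfolding partial_synth_def by measurable

lemma coef_ball_nonneg:
  assumes "coef_ball A \<theta>"
  shows "A \<ge> 0"
proof -
  from assms have "0 \<le> A * sigma_l \<alpha> 0" unfolding coef_ball_def by (metis abs_ge_zero order_trans less_numeral_extra(1) power_0)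
  then show ?thesis using sigma_l_pos[of \<alpha> 0] by (simp add: zero_le_mult_iff)
qed

lemma abs_level_le:
  assumes "coef_ball A \<theta>" "t \<in> {0..1}"
  shows "\<bar>level \<theta> l t\<bar> \<le> A * C * q ^ l"
proof -
  have "\<bar>level \<theta> l t\<bar> \<le> (\<Sum>k<2 ^ l. \<bar>\<theta> (l, k)\<bar> * \<bar>\<psi> l k t\<bar>)"
    unfolding level_def by (rule order_trans[OF sum_abs]) (simp add: abs_mult)
  also have "\<dots> \<le> (\<Sum>k<2 ^ l. A * sigma_l \<alpha> l * \<bar>\<psi> l k t\<bar>)"
    using assms(1) by (intro sum_mono mult_right_mono) (auto simp: coef_ball_def)
  also have "\<dots> = A * sigma_l \<alpha> l * (\<Sum>k<2 ^ l. \<bar>\<psi> l k t\<bar>)" by (simp add: sum_distrib_left)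
  also have "\<dots> \<le> A * sigma_l \<alpha> l * (C * 2 powr (real l / 2))"
    using coef_ball_nonneg[OF assms(1)] sigma_l_pos[of \<alpha> l] sum_abs_psi_le[OF assms(2)]
    by (intro mult_left_mono) auto
  also have "\<dots> = A * C * q ^ l" using sigma_l_mult_weight[of l] by (simp add: algebra_simps)
  finally show ?thesis .
qed

lemma summable_mult_q_power: "summable (\<lambda>l. K * q ^ l)"
  using q_pos q_less_1 by (intro summable_mult summable_geometric) simp

lemma suminf_mult_q_power: "(\<Sum>l. K * q ^ l) = K / (1 - q)"
  using q_pos q_less_1 by (subst suminf_mult) (simp_all add: suminf_geometric field_simps)

lemma level_sums_wsynth:
  assumes "coef_ball A \<theta>" "t \<in> {0..1}"
  shows "(\<lambda>l. level \<theta> l t) sums wsynth \<psi> \<theta> t"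
proof -
  have "summable (\<lambda>l. level \<theta> l t)"
    by (rule summable_comparison_test'[OF summable_mult_q_power[of "A * C"]])
      (use abs_level_le[OF assms] in auto)
  then show ?thesis unfolding wsynth_def level_def by (simp add: summable_sums)
qed

lemma partial_synth_LIMSEQ:
  assumes "coef_ball A \<theta>" "t \<in> {0..1}"
  shows "(\<lambda>L. partial_synth \<theta> L t) \<longlonglongrightarrow> wsynth \<psi> \<theta> t"
  using level_sums_wsynth[OF assms] unfolding sums_def partial_synth_def .

lemma abs_partial_synth_le:
  assumes "coef_ball A \<theta>" "t \<in> {0..1}"
  shows "\<bar>partial_synth \<theta> L t\<bar> \<le> A * C / (1 - q)"
proof -
  have "\<bar>partial_synth \<theta> L t\<bar> \<le> (\<Sum>l<L. A * C * q ^ l)"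
    unfolding partial_synth_def by (rule order_trans[OF sum_abs sum_mono[OF abs_level_le[OF assms]]])
  also have "\<dots> \<le> (\<Sum>l. A * C * q ^ l)"
    using coef_ball_nonneg[OF assms(1)] C_pos q_pos
    by (intro sum_le_suminf summable_mult_q_power) auto
  also have "\<dots> = A * C / (1 - q)" by (rule suminf_mult_q_power)
  finally show ?thesis .
qed

lemma abs_wsynth_le:
  assumes "coef_ball A \<theta>" "t \<in> {0..1}"
  shows "\<bar>wsynth \<psi> \<theta> t\<bar> \<le> A * C / (1 - q)"
  using partial_synth_LIMSEQ[OF assms] abs_partial_synth_le[OF assms]
  by (intro tendsto_le[OF _ tendsto_const tendsto_rabs]) auto

lemma integrable_mult_psi:
  assumes g: "g \<in> borel_measurable lborel" and g_le: "AE t in lborel. t \<in> {0..1} \<longrightarrow> \<bar>g t\<bar> \<le> K"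
    and k: "k < 2 ^ l"
  shows "integrable lborel (\<lambda>t. indicator {0..1} t * (g t * \<psi> l k t))"
proof (rule set_integrable_01_bounded)
  show "AE t in lborel. t \<in> {0..1} \<longrightarrow> \<bar>g t * \<psi> l k t\<bar> \<le> K * (C * 2 powr (real l / 2))"
    using g_le by eventually_elim
      (use abs_psi_le[OF k] in \<open>auto simp: abs_mult intro!: mult_mono order.trans[OF abs_ge_zero]\<close>)
qed (use g in measurable)

lemma integrable_psi_mult_psi:
  assumes "k < 2 ^ l" "k' < 2 ^ l'"
  shows "integrable lborel (\<lambda>t. indicator {0..1} t * (\<psi> l k t * \<psi> l' k' t))"
  using abs_psi_le[OF assms(1)] by (intro integrable_mult_psi[OF psi_measurable _ assms(2)] AE_I2) auto

lemma integral_partial_synth_psi: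
  assumes k': "k' < 2 ^ l'"
  shows "(\<integral>t. indicator {0..1} t * (partial_synth \<theta> L t * \<psi> l' k' t) \<partial>lborel)
    = (if l' < L then \<theta> (l', k') else 0)"
proof -
  have "(\<lambda>t. indicator {0..1} t * (partial_synth \<theta> L t * \<psi> l' k' t))
      = (\<lambda>t. \<Sum>l<L. \<Sum>k<2 ^ l. \<theta> (l, k) * (indicator {0..1} t * (\<psi> l k t * \<psi> l' k' t)))"
    unfolding partial_synth_def level_def
    by (simp add: sum_distrib_left sum_distrib_right algebra_simps)
  then have "(\<integral>t. indicator {0..1} t * (partial_synth \<theta> L t * \<psi> l' k' t) \<partial>lborel)
      = (\<Sum>l<L. \<integral>t. (\<Sum>k<2 ^ l. \<theta> (l, k) * (indicator {0..1} t * (\<psi> l k t * \<psi> l' k' t))) \<partial>lborel)"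
    by (simp, intro Bochner_Integration.integral_sum Bochner_Integration.integrable_sum
        Bochner_Integration.integrable_mult_right integrable_psi_mult_psi k') simp
  also have "\<dots> = (\<Sum>l<L. \<Sum>k<2 ^ l. \<theta> (l, k) * (\<integral>t. indicator {0..1} t * (\<psi> l k t * \<psi> l' k' t) \<partial>lborel))"
    by (intro sum.cong refl trans[OF Bochner_Integration.integral_sum] integral_mult_right_zero
        Bochner_Integration.integrable_mult_right integrable_psi_mult_psi k') simp
  also have "\<dots> = (\<Sum>l<L. \<Sum>k<2 ^ l. \<theta> (l, k) * (if (l, k) = (l', k') then 1 else 0))"
    using orthonormal[OF _ k'] by (intro sum.cong refl) (simp add: set_lebesgue_integral_def)
  also have "\<dots> = (\<Sum>l<L. if l = l' then \<theta> (l', k') else 0)"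
    using k' by (intro sum.cong refl) (auto simp: if_distrib cong: if_cong)
  finally show ?thesis by simp
qed

text \<open>Dominated convergence along the partial sums, whose integrals against \<open>\<psi> l' k'\<close>
  stabilise at \<open>\<theta> (l', k')\<close> by orthonormality.\<close>
lemma wsynth_inner_psi:
  assumes \<theta>: "coef_ball A \<theta>" and k': "k' < 2 ^ l'"
  shows "(LINT t:{0..1}|lborel. wsynth \<psi> \<theta> t * \<psi> l' k' t) = \<theta> (l', k')"
proof -
  define s where "s L t = indicator {0..1} t * (partial_synth \<theta> L t * \<psi> l' k' t)" for L t
  define F where "F t = indicator {0..1} t * (wsynth \<psi> \<theta> t * \<psi> l' k' t)" for t
  define D where "D = A * C / (1 - q) * (C * 2 powr (real l' / 2))"
  have lim: "(\<lambda>L. s L t) \<longlonglongrightarrow> F t" for t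
    by (cases "t \<in> {0..1}")
      (auto simp: s_def F_def intro!: tendsto_mult partial_synth_LIMSEQ[OF \<theta>])
  have s_measurable [measurable]: "s L \<in> borel_measurable lborel" for L
    unfolding s_def by measurable
  have F_measurable: "F \<in> borel_measurable lborel"
    by (rule borel_measurable_LIMSEQ_real[OF lim]) simp
  have s_le: "\<bar>s L t\<bar> \<le> D * indicator {0..1} t" for L t
  proof (cases "t \<in> {0..1}")
    case True
    have "\<bar>partial_synth \<theta> L t * \<psi> l' k' t\<bar> \<le> D"
      unfolding abs_mult D_def using coef_ball_nonneg[OF \<theta>] C_pos q_less_1
      by (intro mult_mono abs_partial_synth_le[OF \<theta> True] abs_psi_le[OF k' True]) auto
    then show ?thesis using True by (simp add: s_def)
  qed (simp add: s_def)
  have "(\<lambda>L. integral\<^sup>L lborel (s L)) \<longlonglongrightarrow> integral\<^sup>L lborel F"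
    by (rule integral_dominated_convergence[OF F_measurable s_measurable, of "\<lambda>t. D * indicator {0..1} t"])
      (auto intro: lim s_le AE_I2)
  moreover have "(\<lambda>L. integral\<^sup>L lborel (s L)) \<longlonglongrightarrow> \<theta> (l', k')"
  proof (rule tendsto_eventually)
    show "\<forall>\<^sub>F L in sequentially. integral\<^sup>L lborel (s L) = \<theta> (l', k')"
      using eventually_gt_at_top[of l']
      by eventually_elim (simp add: s_def[abs_def] integral_partial_synth_psi[OF k'])
  qed
  ultimately have "integral\<^sup>L lborel F = \<theta> (l', k')" using LIMSEQ_unique by blast
  then show ?thesis by (simp add: F_def[abs_def] set_lebesgue_integral_def)
qed

text \<open>The difference of \<open>f\<close> and its wavelet series is square integrable with vanishing
  coefficients, so completeness of the basis applies.\<close>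
lemma indicator_wsynth_measurable:
  assumes "coef_ball A \<theta>"
  shows "(\<lambda>t. indicator {0..1} t * wsynth \<psi> \<theta> t) \<in> borel_measurable lborel"
proof (rule borel_measurable_LIMSEQ_real)
  show "(\<lambda>L. indicator {0..1} t * partial_synth \<theta> L t) \<longlonglongrightarrow> indicator {0..1} t * wsynth \<psi> \<theta> t" for t
    by (cases "t \<in> {0..1}") (auto intro!: tendsto_mult partial_synth_LIMSEQ[OF assms])
qed simp

lemma wsynth_wcoefs_AE_eq:
  assumes f: "in_Linf01 f" and ball: "coef_ball A (wcoefs \<psi> f)"
  shows "AE t in lborel. t \<in> {0..1} \<longrightarrow> wsynth \<psi> (wcoefs \<psi> f) t = f t"
proof -
  from f obtain K where f_measurable [measurable]: "f \<in> borel_measurable lborel"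
    and f_le: "AE t in lborel. t \<in> {0..1} \<longrightarrow> \<bar>f t\<bar> \<le> K"
    unfolding in_Linf01_def by blast
  define c where "c = wcoefs \<psi> f"
  define G where "G t = indicator {0..1} t * wsynth \<psi> c t" for t
  define g where "g t = G t - f t" for t
  define W where "W = A * C / (1 - q)"
  have G_measurable [measurable]: "G \<in> borel_measurable lborel"
    unfolding G_def[abs_def] c_def by (rule indicator_wsynth_measurable[OF ball])
  have G_le: "AE t in lborel. t \<in> {0..1} \<longrightarrow> \<bar>G t\<bar> \<le> W"
    using abs_wsynth_le[OF ball] by (simp add: G_def c_def W_def)
  have g_measurable [measurable]: "g \<in> borel_measurable lborel" unfolding g_def by measurable
  have "AE t in lborel. t \<in> {0..1} \<longrightarrow> \<bar>(g t)\<^sup>2\<bar> \<le> (W + K)\<^sup>2"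
    using f_le G_le
  proof eventually_elim
    case (elim t)
    show ?case
    proof
      assume t: "t \<in> {0..1}"
      have "\<bar>g t\<bar> \<le> W + K" using elim t unfolding g_def by fastforce
      then show "\<bar>(g t)\<^sup>2\<bar> \<le> (W + K)\<^sup>2" using power_mono[of "\<bar>g t\<bar>" "W + K" 2] by simp
    qed
  qed
  then have g_square: "set_integrable lborel {0..1} (\<lambda>t. (g t)\<^sup>2)"
    using set_integrable_01_bounded[of "\<lambda>t. (g t)\<^sup>2"] unfolding set_integrable_def by simp
  have "(LINT t:{0..1}|lborel. g t * \<psi> l k t) = 0" if k: "k < 2 ^ l" for l k
  proof -
    have "(LINT t:{0..1}|lborel. g t * \<psi> l k t)
        = (\<integral>t. indicator {0..1} t * (G t * \<psi> l k t) \<partial>lborel)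
          - (\<integral>t. indicator {0..1} t * (f t * \<psi> l k t) \<partial>lborel)"
      unfolding set_lebesgue_integral_def g_def
      by (subst Bochner_Integration.integral_diff[OF integrable_mult_psi[OF G_measurable G_le k]
          integrable_mult_psi[OF f_measurable f_le k], symmetric]) (simp add: algebra_simps)
    also have "(\<integral>t. indicator {0..1} t * (G t * \<psi> l k t) \<partial>lborel)
        = (LINT t:{0..1}|lborel. wsynth \<psi> c t * \<psi> l k t)"
      unfolding set_lebesgue_integral_def G_def by (intro Bochner_Integration.integral_cong) (auto simp: indicator_def)
    also have "\<dots> = c (l, k)"
      using wsynth_inner_psi[OF ball k] by (simp add: c_def)
    also have "(\<integral>t. indicator {0..1} t * (f t * \<psi> l k t) \<partial>lborel) = c (l, k)"
      by (simp add: c_def wcoef_def set_lebesgue_integral_def)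
    finally show ?thesis by simp
  qed
  then have "AE t in lborel. t \<in> {0..1} \<longrightarrow> g t = 0"
    using complete[OF g_measurable g_square] by blast
  then show ?thesis by eventually_elim (auto simp: g_def G_def c_def)
qed

text \<open>Deterministic part of the error: levels below \<open>m\<close> are correct up to the threshold
  \<open>\<tau>\<close>, and levels from \<open>m\<close> on are bounded via the coefficient ball of radius \<open>B\<close>.\<close>
definition truncation_error :: "real \<Rightarrow> real \<Rightarrow> nat \<Rightarrow> real" where
  "truncation_error B \<tau> m = (\<Sum>l<m. C * 2 powr (real l / 2) * \<tau>) + 2 * B * C * q ^ m / (1 - q)"

lemma truncation_error_nonneg: "B \<ge> 0 \<Longrightarrow> \<tau> \<ge> 0 \<Longrightarrow> truncation_error B \<tau> m \<ge> 0"
  unfolding truncation_error_def using C_pos q_pos q_less_1 by (intro add_nonneg_nonneg sum_nonneg) auto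

lemma abs_level_diff_le:
  assumes \<theta>: "coef_ball B \<theta>" and c: "coef_ball R c" and RB: "R \<le> B" and \<tau>: "\<tau> \<ge> 0"
    and t: "t \<in> {0..1}"
  shows "\<bar>level \<theta> l t - level c l t\<bar>
    \<le> (if l < m then C * 2 powr (real l / 2) * \<tau>
          + (\<Sum>k<2 ^ l. C * 2 powr (real l / 2) * large_dev (c (l, k)) \<tau> (\<theta> (l, k)))
        else 2 * B * C * q ^ l)"
proof -
  define w where "w = C * 2 powr (real l / 2)"
  have "\<bar>level \<theta> l t - level c l t\<bar> = \<bar>\<Sum>k<2 ^ l. (\<theta> (l, k) - c (l, k)) * \<psi> l k t\<bar>"
    unfolding level_def by (simp add: sum_subtractf algebra_simps)
  also have "\<dots> \<le> (\<Sum>k<2 ^ l. \<bar>\<theta> (l, k) - c (l, k)\<bar> * \<bar>\<psi> l k t\<bar>)"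
    by (rule order_trans[OF sum_abs]) (simp add: abs_mult)
  finally have diff_le: "\<bar>level \<theta> l t - level c l t\<bar> \<le> (\<Sum>k<2 ^ l. \<bar>\<theta> (l, k) - c (l, k)\<bar> * \<bar>\<psi> l k t\<bar>)" .
  show ?thesis
  proof (cases "l < m")
    case True
    have "(\<Sum>k<2 ^ l. \<bar>\<theta> (l, k) - c (l, k)\<bar> * \<bar>\<psi> l k t\<bar>)
        \<le> (\<Sum>k<2 ^ l. \<tau> * \<bar>\<psi> l k t\<bar> + large_dev (c (l, k)) \<tau> (\<theta> (l, k)) * \<bar>\<psi> l k t\<bar>)"
      using abs_diff_le_large_dev[OF \<tau>] by (intro sum_mono) (simp add: distrib_right[symmetric] mult_right_mono)
    also have "\<dots> = \<tau> * (\<Sum>k<2 ^ l. \<bar>\<psi> l k t\<bar>) + (\<Sum>k<2 ^ l. large_dev (c (l, k)) \<tau> (\<theta> (l, k)) * \<bar>\<psi> l k t\<bar>)"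
      by (simp add: sum.distrib sum_distrib_left)
    also have "\<dots> \<le> \<tau> * w + (\<Sum>k<2 ^ l. large_dev (c (l, k)) \<tau> (\<theta> (l, k)) * w)"
      using sum_abs_psi_le[OF t, of l] abs_psi_le[OF _ t] \<tau> large_dev_nonneg
      by (intro add_mono mult_left_mono sum_mono) (auto simp: w_def)
    finally show ?thesis using True diff_le by (simp add: w_def algebra_simps)
  next
    case False
    have "\<bar>\<theta> (l, k) - c (l, k)\<bar> \<le> 2 * B * sigma_l \<alpha> l" if "k < 2 ^ l" for k
    proof -
      have "\<bar>\<theta> (l, k)\<bar> \<le> B * sigma_l \<alpha> l" "\<bar>c (l, k)\<bar> \<le> R * sigma_l \<alpha> l"
        using \<theta> c that unfolding coef_ball_def by auto
      moreover have "R * sigma_l \<alpha> l \<le> B * sigma_l \<alpha> l"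
        using RB sigma_l_pos[of \<alpha> l] by (intro mult_right_mono) auto
      ultimately show ?thesis by linarith
    qed
    then have "(\<Sum>k<2 ^ l. \<bar>\<theta> (l, k) - c (l, k)\<bar> * \<bar>\<psi> l k t\<bar>)
        \<le> (\<Sum>k<2 ^ l. 2 * B * sigma_l \<alpha> l * \<bar>\<psi> l k t\<bar>)"
      by (intro sum_mono mult_right_mono) auto
    also have "\<dots> = 2 * B * sigma_l \<alpha> l * (\<Sum>k<2 ^ l. \<bar>\<psi> l k t\<bar>)"
      by (simp add: sum_distrib_left)
    also have "\<dots> \<le> 2 * B * sigma_l \<alpha> l * w"
      using sum_abs_psi_le[OF t, of l] coef_ball_nonneg[OF \<theta>] sigma_l_pos[of \<alpha> l]
      by (intro mult_left_mono) (auto simp: w_def)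
    also have "\<dots> = 2 * B * C * q ^ l" using sigma_l_mult_weight[of l] by (simp add: w_def algebra_simps)
    finally show ?thesis using False diff_le by simp
  qed
qed

lemma abs_wsynth_diff_le:
  assumes \<theta>: "coef_ball B \<theta>" and c: "coef_ball R c" and RB: "R \<le> B" and \<tau>: "\<tau> \<ge> 0"
    and t: "t \<in> {0..1}"
  shows "\<bar>wsynth \<psi> \<theta> t - wsynth \<psi> c t\<bar>
    \<le> truncation_error B \<tau> m
       + (\<Sum>l<m. \<Sum>k<2 ^ l. C * 2 powr (real l / 2) * large_dev (c (l, k)) \<tau> (\<theta> (l, k)))"
proof -
  define \<beta> where "\<beta> l = (if l < m then C * 2 powr (real l / 2) * \<tau>
      + (\<Sum>k<2 ^ l. C * 2 powr (real l / 2) * large_dev (c (l, k)) \<tau> (\<theta> (l, k)))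
      else 2 * B * C * q ^ l)" for l
  have diff_sums: "(\<lambda>l. level \<theta> l t - level c l t) sums (wsynth \<psi> \<theta> t - wsynth \<psi> c t)"
    by (intro sums_diff level_sums_wsynth[OF \<theta> t] level_sums_wsynth[OF c t])
  have shift: "\<beta> (l + m) = (2 * B * C * q ^ m) * q ^ l" for l
    by (simp add: \<beta>_def power_add algebra_simps)
  have "summable \<beta>"
    using summable_mult_q_power[of "2 * B * C * q ^ m"]
    by (subst summable_iff_shift[of _ m, symmetric]) (simp add: shift)
  have "\<bar>wsynth \<psi> \<theta> t - wsynth \<psi> c t\<bar> = norm (\<Sum>l. level \<theta> l t - level c l t)"
    using sums_unique[OF diff_sums] by simp
  also have "\<dots> \<le> suminf \<beta>"
    using abs_level_diff_le[OF \<theta> c RB \<tau> t] \<open>summable \<beta>\<close>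
    by (intro norm_suminf_le) (auto simp: \<beta>_def)
  also have "\<dots> = (\<Sum>l. \<beta> (l + m)) + sum \<beta> {..<m}"
    by (rule suminf_split_initial_segment[OF \<open>summable \<beta>\<close>])
  also have "(\<Sum>l. \<beta> (l + m)) = 2 * B * C * q ^ m / (1 - q)"
    unfolding shift by (rule suminf_mult_q_power)
  finally show ?thesis
    by (simp add: \<beta>_def truncation_error_def sum.distrib)
qed

lemma wsynth_measurable_01:
  assumes "coef_ball A \<theta>"
  shows "wsynth \<psi> \<theta> \<in> borel_measurable (restrict_space lborel {0..1})"
proof (rule borel_measurable_LIMSEQ_real)
  fix t assume "t \<in> space (restrict_space lborel {0..1::real})"
  then show "(\<lambda>L. partial_synth \<theta> L t) \<longlonglongrightarrow> wsynth \<psi> \<theta> t"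
    by (intro partial_synth_LIMSEQ[OF assms]) (simp add: space_restrict_space)
qed (rule measurable_restrict_space1, simp)

lemma Linf_norm01_wsynth_diff_le:
  assumes f: "f \<in> borel_measurable lborel"
    and f_eq: "AE t in lborel. t \<in> {0..1} \<longrightarrow> wsynth \<psi> c t = f t"
    and \<theta>: "coef_ball B \<theta>" and c: "coef_ball R c" and RB: "R \<le> B" and \<tau>: "\<tau> \<ge> 0"
  shows "Linf_norm01 (\<lambda>t. wsynth \<psi> \<theta> t - f t)
    \<le> ennreal (truncation_error B \<tau> m
       + (\<Sum>l<m. \<Sum>k<2 ^ l. C * 2 powr (real l / 2) * large_dev (c (l, k)) \<tau> (\<theta> (l, k))))"
  unfolding Linf_norm01_def
proof (rule esssup_I)
  have "f \<in> borel_measurable (restrict_space lborel {0..1})"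
    by (rule measurable_restrict_space1[OF f])
  then show "(\<lambda>t. ennreal \<bar>wsynth \<psi> \<theta> t - f t\<bar>) \<in> borel_measurable (restrict_space lborel {0..1})"
    using wsynth_measurable_01[OF \<theta>] by measurable
  show "AE t in restrict_space lborel {0..1}. ennreal \<bar>wsynth \<psi> \<theta> t - f t\<bar>
      \<le> ennreal (truncation_error B \<tau> m
         + (\<Sum>l<m. \<Sum>k<2 ^ l. C * 2 powr (real l / 2) * large_dev (c (l, k)) \<tau> (\<theta> (l, k))))"
  proof (subst AE_restrict_space_iff)
    show "AE t in lborel. t \<in> {0..1} \<longrightarrow> ennreal \<bar>wsynth \<psi> \<theta> t - f t\<bar>
      \<le> ennreal (truncation_error B \<tau> m
         + (\<Sum>l<m. \<Sum>k<2 ^ l. C * 2 powr (real l / 2) * large_dev (c (l, k)) \<tau> (\<theta> (l, k))))"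
      using f_eq
    proof eventually_elim
      case (elim t)
      then show ?case using abs_wsynth_diff_le[OF \<theta> c RB \<tau>, of t m] by (auto intro: ennreal_leI)
    qed
  qed simp
qed

end

section \<open>Posterior and noise as product measures\<close>

lemma prob_space_post_coord_family:
  "B > 0 \<Longrightarrow> prob_space ((\<lambda>(l, k). post_coord B (sigma_l \<alpha> l) n (x (l, k))) i)"
  by (cases i) (auto intro!: prob_space_post_coord sigma_l_pos)

lemma prob_space_posterior: "B > 0 \<Longrightarrow> prob_space (posterior \<alpha> B n x)"
  unfolding posterior_def by (intro prob_space_PiM prob_space_post_coord_family)

lemma posterior_component_measurable:
  assumes "k < 2 ^ l"
  shows "(\<lambda>\<theta>. \<theta> (l, k)) \<in> borel_measurable (posterior \<alpha> B n x)"
proof -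
  have "(l, k) \<in> wav_idx" using assms by (simp add: wav_idx_def)
  then have "(\<lambda>\<theta>. \<theta> (l, k)) \<in> posterior \<alpha> B n x \<rightarrow>\<^sub>M post_coord B (sigma_l \<alpha> l) n (x (l, k))"
    unfolding posterior_def by (subst (2) prod.case[symmetric]) (rule measurable_component_singleton)
  then show ?thesis by (simp add: measurable_cong_sets[OF refl sets_post_coord])
qed

lemma nn_integral_posterior_component:
  assumes "B > 0" "k < 2 ^ l" "g \<in> borel_measurable borel"
  shows "(\<integral>\<^sup>+ \<theta>. g (\<theta> (l, k)) \<partial>posterior \<alpha> B n x) = (\<integral>\<^sup>+ u. g u \<partial>post_coord B (sigma_l \<alpha> l) n (x (l, k)))"
proof -
  have "g \<in> borel_measurable (post_coord B (sigma_l \<alpha> l) n (x (l, k)))"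
    by (subst measurable_cong_sets[OF sets_post_coord refl]) (rule assms(3))
  moreover have "(l, k) \<in> wav_idx" using assms(2) by (simp add: wav_idx_def)
  ultimately show ?thesis
    unfolding posterior_def
    using nn_integral_PiM_component[where M = "\<lambda>(l, k). post_coord B (sigma_l \<alpha> l) n (x (l, k))",
        OF prob_space_post_coord_family[OF assms(1)]] by simp
qed

lemma AE_posterior_abs_le:
  assumes "B > 0"
  shows "AE \<theta> in posterior \<alpha> B n x. \<forall>l k. k < 2 ^ l \<longrightarrow> \<bar>\<theta> (l, k)\<bar> \<le> B * sigma_l \<alpha> l"
proof -
  have "AE \<theta> in posterior \<alpha> B n x. \<forall>i\<in>wav_idx. \<bar>\<theta> i\<bar> \<le> B * sigma_l \<alpha> (fst i)"
  proof (subst AE_ball_countable, rule countableI_type, intro ballI)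
    fix i assume i: "i \<in> wav_idx"
    show "AE \<theta> in posterior \<alpha> B n x. \<bar>\<theta> i\<bar> \<le> B * sigma_l \<alpha> (fst i)"
      unfolding posterior_def
      by (rule AE_PiM_component[OF prob_space_post_coord_family[OF assms] i])
        (auto split: prod.split intro: AE_post_coord_support[OF assms sigma_l_pos])
  qed
  then show ?thesis by eventually_elim (auto simp: wav_idx_def)
qed

lemma prob_space_noise: "prob_space noise"
  unfolding noise_def by (intro prob_space_PiM prob_space_std_normal)

lemma noise_component_measurable:
  assumes "k < 2 ^ l"
  shows "(\<lambda>\<epsilon>. \<epsilon> (l, k)) \<in> borel_measurable noise"
proof -
  have "(l, k) \<in> wav_idx" using assms by (simp add: wav_idx_def)
  then have "(\<lambda>\<epsilon>. \<epsilon> (l, k)) \<in> noise \<rightarrow>\<^sub>M density lborel std_normal_density"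
    unfolding noise_def by (rule measurable_component_singleton)
  then show ?thesis by (subst (asm) measurable_cong_sets[OF refl sets_density]) simp
qed

lemma nn_integral_noise_component:
  assumes "k < 2 ^ l" "g \<in> borel_measurable borel"
  shows "(\<integral>\<^sup>+ \<epsilon>. g (\<epsilon> (l, k)) \<partial>noise) = (\<integral>\<^sup>+ e. g e \<partial>density lborel std_normal_density)"
proof -
  have "(l, k) \<in> wav_idx" using assms(1) by (simp add: wav_idx_def)
  with assms(2) show ?thesis
    unfolding noise_def by (subst nn_integral_PiM_component[OF prob_space_std_normal]) auto
qed

lemma nn_integral_noise_dev_bound_le:
  assumes k: "k < 2 ^ l" and w: "w \<ge> 0" and coord: "R < B" "R \<ge> 0" "\<sigma> > 0" "\<tau> > 0"
  shows "(\<integral>\<^sup>+ \<epsilon>. ennreal (w * dev_bound B R \<tau> n \<sigma> (\<epsilon> (l, k))) \<partial>noise)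
    \<le> ennreal (w * coord_error B R \<tau> n \<sigma>)"
proof -
  have "(\<integral>\<^sup>+ \<epsilon>. ennreal (w * dev_bound B R \<tau> n \<sigma> (\<epsilon> (l, k))) \<partial>noise)
      = (\<integral>\<^sup>+ \<epsilon>. ennreal w * ennreal (dev_bound B R \<tau> n \<sigma> (\<epsilon> (l, k))) \<partial>noise)"
    using w dev_bound_nonneg[OF coord] by (intro nn_integral_cong) (simp add: ennreal_mult)
  also have "\<dots> = ennreal w * (\<integral>\<^sup>+ \<epsilon>. ennreal (dev_bound B R \<tau> n \<sigma> (\<epsilon> (l, k))) \<partial>noise)"
    by (intro nn_integral_cmult measurable_compose[OF _ measurable_ennreal]
        measurable_compose_rev[OF dev_bound_measurable noise_component_measurable[OF k]])
  also have "\<dots> = ennreal w * (\<integral>\<^sup>+ e. ennreal (dev_bound B R \<tau> n \<sigma> e) \<partial>density lborel std_normal_density)"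
    by (subst nn_integral_noise_component[OF k]) simp_all
  also have "\<dots> \<le> ennreal w * ennreal (coord_error B R \<tau> n \<sigma>)"
    by (intro mult_left_mono std_normal_dev_bound_le[OF coord]) simp
  also have "\<dots> = ennreal (w * coord_error B R \<tau> n \<sigma>)"
    using w coord_error_nonneg[OF coord] by (simp add: ennreal_mult)
  finally show ?thesis .
qed

lemma observ_apply: "observ \<psi> f n \<epsilon> (l, k) = wcoef \<psi> f l k + \<epsilon> (l, k) / sqrt (real n)"
  by (simp add: observ_def)

context bounded_wavelet_basis
begin

lemma nn_integral_posterior_Linf_le:
  assumes B: "B > 0" and f: "f \<in> borel_measurable lborel"
    and f_eq: "AE t in lborel. t \<in> {0..1} \<longrightarrow> wsynth \<psi> c t = f t"
    and c: "coef_ball R c" and RB: "R \<le> B" and \<tau>: "\<tau> \<ge> 0"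
  shows "(\<integral>\<^sup>+ \<theta>. Linf_norm01 (\<lambda>t. wsynth \<psi> \<theta> t - f t) \<partial>posterior \<alpha> B n x)
    \<le> ennreal (truncation_error B \<tau> m)
       + (\<Sum>l<m. \<Sum>k<2 ^ l. ennreal (C * 2 powr (real l / 2))
           * (\<integral>\<^sup>+ u. ennreal (large_dev (c (l, k)) \<tau> u) \<partial>post_coord B (sigma_l \<alpha> l) n (x (l, k))))"
proof -
  interpret P: prob_space "posterior \<alpha> B n x" by (rule prob_space_posterior[OF B])
  define dev where "dev l k \<theta> = ennreal (C * 2 powr (real l / 2) * large_dev (c (l, k)) \<tau> (\<theta> (l, k)))"
    for l k :: nat and \<theta>
  have dev_measurable: "dev l k \<in> borel_measurable (posterior \<alpha> B n x)" if "k \<in> {..<2 ^ l}" for l k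
    using that unfolding dev_def
    by (intro measurable_compose[OF _ measurable_ennreal] borel_measurable_times
        borel_measurable_const measurable_compose_rev[OF _ posterior_component_measurable]) auto
  have "Linf_norm01 (\<lambda>t. wsynth \<psi> \<theta> t - f t)
      \<le> ennreal (truncation_error B \<tau> m) + (\<Sum>l<m. \<Sum>k<2 ^ l. dev l k \<theta>)" if "coef_ball B \<theta>" for \<theta>
    using Linf_norm01_wsynth_diff_le[OF f f_eq that c RB \<tau>, of m] C_pos unfolding dev_def
    by (subst (asm) ennreal_add_sum_sum)
      (auto intro!: truncation_error_nonneg mult_nonneg_nonneg large_dev_nonneg \<tau> less_imp_le[OF B])
  then have "(\<integral>\<^sup>+ \<theta>. Linf_norm01 (\<lambda>t. wsynth \<psi> \<theta> t - f t) \<partial>posterior \<alpha> B n x)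
      \<le> (\<integral>\<^sup>+ \<theta>. ennreal (truncation_error B \<tau> m) + (\<Sum>l<m. \<Sum>k<2 ^ l. dev l k \<theta>) \<partial>posterior \<alpha> B n x)"
    using AE_posterior_abs_le[OF B, of \<alpha> n x] unfolding coef_ball_def
    by (intro nn_integral_mono_AE) (auto elim!: eventually_mono)
  also have "\<dots> = ennreal (truncation_error B \<tau> m)
      + (\<Sum>l<m. \<Sum>k<2 ^ l. \<integral>\<^sup>+ \<theta>. dev l k \<theta> \<partial>posterior \<alpha> B n x)"
    by (rule P.nn_integral_add_sum_sum[OF dev_measurable])
  also have "\<dots> = ennreal (truncation_error B \<tau> m)
       + (\<Sum>l<m. \<Sum>k<2 ^ l. ennreal (C * 2 powr (real l / 2))
           * (\<integral>\<^sup>+ u. ennreal (large_dev (c (l, k)) \<tau> u) \<partial>post_coord B (sigma_l \<alpha> l) n (x (l, k))))"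
  proof (intro arg_cong2[where f = "(+)"] refl sum.cong)
    fix l k :: nat assume "l \<in> {..<m}" "k \<in> {..<2 ^ l}"
    then have k: "k < 2 ^ l" by simp
    have "(\<integral>\<^sup>+ \<theta>. dev l k \<theta> \<partial>posterior \<alpha> B n x)
        = (\<integral>\<^sup>+ \<theta>. ennreal (C * 2 powr (real l / 2)) * ennreal (large_dev (c (l, k)) \<tau> (\<theta> (l, k)))
            \<partial>posterior \<alpha> B n x)"
      unfolding dev_def using C_pos by (intro nn_integral_cong) (simp add: ennreal_mult large_dev_nonneg)
    also have "\<dots> = ennreal (C * 2 powr (real l / 2))
        * (\<integral>\<^sup>+ \<theta>. ennreal (large_dev (c (l, k)) \<tau> (\<theta> (l, k))) \<partial>posterior \<alpha> B n x)"
      by (intro nn_integral_cmult measurable_compose[OF _ measurable_ennreal]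
          measurable_compose_rev[OF large_dev_measurable posterior_component_measurable[OF k]])
    finally show "(\<integral>\<^sup>+ \<theta>. dev l k \<theta> \<partial>posterior \<alpha> B n x)
        = ennreal (C * 2 powr (real l / 2))
          * (\<integral>\<^sup>+ u. ennreal (large_dev (c (l, k)) \<tau> u) \<partial>post_coord B (sigma_l \<alpha> l) n (x (l, k)))"
      using nn_integral_posterior_component[OF B k, of "\<lambda>u. ennreal (large_dev (c (l, k)) \<tau> u)"] by simp
  qed
  finally show ?thesis .
qed

lemma nn_integral_posterior_observ_le:
  assumes RB: "R < B" and R: "R \<ge> 0" and f: "in_Linf01 f" and c: "coef_ball R (wcoefs \<psi> f)"
    and \<tau>: "\<tau> > 0" and n: "n > 0"
  shows "(\<integral>\<^sup>+ \<theta>. Linf_norm01 (\<lambda>t. wsynth \<psi> \<theta> t - f t) \<partial>posterior \<alpha> B n (observ \<psi> f n \<epsilon>))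
    \<le> ennreal (truncation_error B \<tau> m)
       + (\<Sum>l<m. \<Sum>k<2 ^ l. ennreal (C * 2 powr (real l / 2) * dev_bound B R \<tau> n (sigma_l \<alpha> l) (\<epsilon> (l, k))))"
proof (rule order_trans[OF nn_integral_posterior_Linf_le])
  show "f \<in> borel_measurable lborel" using f by (simp add: in_Linf01_def)
  show "ennreal (truncation_error B \<tau> m)
      + (\<Sum>l<m. \<Sum>k<2 ^ l. ennreal (C * 2 powr (real l / 2)) * (\<integral>\<^sup>+ u. ennreal (large_dev (wcoefs \<psi> f (l, k)) \<tau> u)
          \<partial>post_coord B (sigma_l \<alpha> l) n (observ \<psi> f n \<epsilon> (l, k))))
    \<le> ennreal (truncation_error B \<tau> m)
       + (\<Sum>l<m. \<Sum>k<2 ^ l. ennreal (C * 2 powr (real l / 2) * dev_bound B R \<tau> n (sigma_l \<alpha> l) (\<epsilon> (l, k))))"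
  proof (intro add_left_mono sum_mono)
    fix l k :: nat assume "l \<in> {..<m}" "k \<in> {..<2 ^ l}"
    then have "\<bar>wcoef \<psi> f l k\<bar> \<le> R * sigma_l \<alpha> l" using c by (simp add: coef_ball_def)
    then have "ennreal (C * 2 powr (real l / 2)) * (\<integral>\<^sup>+ u. ennreal (large_dev (wcoef \<psi> f l k) \<tau> u)
           \<partial>post_coord B (sigma_l \<alpha> l) n (wcoef \<psi> f l k + \<epsilon> (l, k) / sqrt (real n)))
        \<le> ennreal (C * 2 powr (real l / 2)) * ennreal (dev_bound B R \<tau> n (sigma_l \<alpha> l) (\<epsilon> (l, k)))"
      by (intro mult_left_mono post_coord_large_dev_noise_le[OF RB R sigma_l_pos _ \<tau> n]) simp_all
    then show "ennreal (C * 2 powr (real l / 2)) * (\<integral>\<^sup>+ u. ennreal (large_dev (wcoefs \<psi> f (l, k)) \<tau> u)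
           \<partial>post_coord B (sigma_l \<alpha> l) n (observ \<psi> f n \<epsilon> (l, k)))
        \<le> ennreal (C * 2 powr (real l / 2) * dev_bound B R \<tau> n (sigma_l \<alpha> l) (\<epsilon> (l, k)))"
      using C_pos dev_bound_nonneg[OF RB R sigma_l_pos \<tau>] by (simp add: observ_apply ennreal_mult)
  qed
qed (use RB R \<tau> wsynth_wcoefs_AE_eq[OF f c] c in auto)

lemma posterior_risk_le:
  assumes RB: "R < B" and R: "R \<ge> 0" and f: "in_Linf01 f" and c: "coef_ball R (wcoefs \<psi> f)"
    and \<tau>: "\<tau> > 0" and n: "n > 0"
  shows "(\<integral>\<^sup>+ \<epsilon>. (\<integral>\<^sup>+ \<theta>. Linf_norm01 (\<lambda>t. wsynth \<psi> \<theta> t - f t)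
                  \<partial>posterior \<alpha> B n (observ \<psi> f n \<epsilon>)) \<partial>noise)
    \<le> ennreal (truncation_error B \<tau> m
       + (\<Sum>l<m. 2 ^ l * (C * 2 powr (real l / 2) * coord_error B R \<tau> n (sigma_l \<alpha> l))))"
proof -
  interpret N: prob_space noise by (rule prob_space_noise)
  define dev where "dev l k \<epsilon> = ennreal (C * 2 powr (real l / 2) * dev_bound B R \<tau> n (sigma_l \<alpha> l) (\<epsilon> (l, k)))"
    for l k :: nat and \<epsilon>
  have dev_measurable: "dev l k \<in> borel_measurable noise" if "k \<in> {..<2 ^ l}" for l k
    using that unfolding dev_def
    by (intro measurable_compose[OF _ measurable_ennreal] borel_measurable_times
        borel_measurable_const measurable_compose_rev[OF _ noise_component_measurable]) auto
  have "(\<integral>\<^sup>+ \<epsilon>. (\<integral>\<^sup>+ \<theta>. Linf_norm01 (\<lambda>t. wsynth \<psi> \<theta> t - f t)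
                  \<partial>posterior \<alpha> B n (observ \<psi> f n \<epsilon>)) \<partial>noise)
      \<le> (\<integral>\<^sup>+ \<epsilon>. ennreal (truncation_error B \<tau> m) + (\<Sum>l<m. \<Sum>k<2 ^ l. dev l k \<epsilon>) \<partial>noise)"
    unfolding dev_def by (intro nn_integral_mono nn_integral_posterior_observ_le[OF RB R f c \<tau> n])
  also have "\<dots> = ennreal (truncation_error B \<tau> m) + (\<Sum>l<m. \<Sum>k<2 ^ l. \<integral>\<^sup>+ \<epsilon>. dev l k \<epsilon> \<partial>noise)"
    by (rule N.nn_integral_add_sum_sum[OF dev_measurable])
  also have "\<dots> \<le> ennreal (truncation_error B \<tau> m)
      + (\<Sum>l<m. \<Sum>k<(2::nat) ^ l. ennreal (C * 2 powr (real l / 2) * coord_error B R \<tau> n (sigma_l \<alpha> l)))"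
    unfolding dev_def using C_pos
    by (intro add_left_mono sum_mono nn_integral_noise_dev_bound_le[OF _ _ RB R sigma_l_pos \<tau>]) auto
  also have "\<dots> = ennreal (truncation_error B \<tau> m
       + (\<Sum>l<m. \<Sum>k<(2::nat) ^ l. C * 2 powr (real l / 2) * coord_error B R \<tau> n (sigma_l \<alpha> l)))"
    using C_pos \<tau> RB R
    by (intro ennreal_add_sum_sum[symmetric] truncation_error_nonneg mult_nonneg_nonneg
        coord_error_nonneg sigma_l_pos) auto
  finally show ?thesis by simp
qed

end

section \<open>Choice of the resolution level and the threshold\<close>

lemma ln_over_n_bounds:
  assumes "n \<ge> (2::nat)"
  shows "0 < ln (real n) / real n" "ln (real n) / real n \<le> 1" "1 / (2 * real n) \<le> ln (real n) / real n"
proof -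
  have "ln (1 / real n) \<le> 1 / real n - 1" using assms by (intro ln_le_minus_one) auto
  then have "ln (real n) \<ge> 1 - 1 / real n" using assms by (simp add: ln_div)
  moreover have "1 / real n \<le> 1 / 2" using assms by (simp add: field_simps)
  ultimately have ln_ge: "ln (real n) \<ge> 1 / 2" by linarith
  have n: "real n > 0" using assms by simp
  show "0 < ln (real n) / real n" using ln_ge n by (intro divide_pos_pos) linarith+
  have "ln (real n) \<le> real n - 1" using n by (intro ln_le_minus_one)
  then show "ln (real n) / real n \<le> 1" using n by (simp add: field_simps)
  show "1 / (2 * real n) \<le> ln (real n) / real n" using ln_ge n by (simp add: field_simps)
qed

lemma inverse_cube_le_ln_over_n_powr:
  assumes n: "n \<ge> (2::nat)" and g: "0 < g" "g \<le> 1"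
  shows "1 / real n ^ 3 \<le> (ln (real n) / real n) powr g"
proof -
  define y where "y = ln (real n) / real n"
  have y: "0 < y" "y \<le> 1" "1 / (2 * real n) \<le> y" using ln_over_n_bounds[OF n] by (simp_all add: y_def)
  have "2 * real n \<le> real n ^ 3"
  proof -
    have "2 * 1 \<le> real n * real n" using n by (intro mult_mono) auto
    then show ?thesis using n by (simp add: power3_eq_cube mult_right_mono[of 2 "real n * real n" "real n", simplified])
  qed
  then have "1 / real n ^ 3 \<le> 1 / (2 * real n)" using n by (intro divide_left_mono) auto
  also have "\<dots> \<le> y powr 1" using y by simp
  also have "\<dots> \<le> y powr g" using y g by (intro powr_mono') auto
  finally show ?thesis by (simp add: y_def)
qed

lemma threshold_bounds:
  assumes n: "n \<ge> (2::nat)"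
  defines "\<tau> \<equiv> 16 * sqrt (ln (real n) / real n)"
  shows "\<tau> > 0" "1 / \<tau> \<le> real n"
    and "exp (- (sqrt (real n) * \<tau> / 4)\<^sup>2 / 4) = 1 / real n ^ 4"
    and "exp (- 5 * real n * \<tau>\<^sup>2 / 32) \<le> 1 / real n ^ 5"
proof -
  define y where "y = ln (real n) / real n"
  have y: "0 < y" "1 / (2 * real n) \<le> y" using ln_over_n_bounds[OF n] by (simp_all add: y_def)
  have np: "real n > 0" using n by simp
  have ln_n: "ln (real n) = real n * y" using np by (simp add: y_def)
  show \<tau>: "\<tau> > 0" using y by (simp add: \<tau>_def y_def)
  have "1 / sqrt (real n) \<le> \<tau>"
  proof -
    have "1 / sqrt (2 * real n) \<le> sqrt y" using real_sqrt_le_mono[OF y(2)] by (simp add: real_sqrt_divide)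
    moreover have "sqrt 2 \<le> 16" using real_sqrt_le_mono[of 2 256] by simp
    then have "1 / sqrt (real n) \<le> 16 * (1 / sqrt (2 * real n))"
      using np by (simp add: real_sqrt_mult field_simps)
    ultimately show ?thesis by (simp add: \<tau>_def y_def)
  qed
  then have "1 / \<tau> \<le> sqrt (real n)" using \<tau> np by (simp add: field_simps)
  also have "sqrt (real n) \<le> real n"
    using real_sqrt_le_mono[of "real n" "(real n)\<^sup>2"] n by (simp add: power2_eq_square)
  finally show "1 / \<tau> \<le> real n" .
  have pow: "exp (- (real k * ln (real n))) = 1 / real n ^ k" for k
  proof -
    have "exp (real k * ln (real n)) = real n ^ k" using np by (simp add: exp_of_nat_mult)
    then show ?thesis by (simp add: exp_minus field_simps)
  qed
  have "(sqrt (real n) * \<tau> / 4)\<^sup>2 = 16 * ln (real n)"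
    using np y by (simp add: \<tau>_def ln_n power2_eq_square real_sqrt_mult[symmetric] y_def[symmetric])
  then show "exp (- (sqrt (real n) * \<tau> / 4)\<^sup>2 / 4) = 1 / real n ^ 4" using pow[of 4] by simp
  have "real n * \<tau>\<^sup>2 = 256 * ln (real n)"
    using np y by (simp add: \<tau>_def ln_n power2_eq_square y_def[symmetric])
  moreover have "ln (real n) \<ge> 0" using n by simp
  ultimately have "exp (- 5 * real n * \<tau>\<^sup>2 / 32) \<le> exp (- (real 5 * ln (real n)))" by simp
  then show "exp (- 5 * real n * \<tau>\<^sup>2 / 32) \<le> 1 / real n ^ 5" by (simp only: pow)
qed

lemma two_powr_half: "(2::real) powr (real l / 2) = sqrt 2 ^ l"
proof -
  have "(2::real) powr (real l / 2) = (2 powr (1/2)) powr real l" by (simp add: powr_powr)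
  then show ?thesis by (simp add: powr_half_sqrt powr_realpow)
qed

lemma sum_sqrt2_power_le: "(\<Sum>l<Suc L. sqrt 2 ^ l) \<le> (2 + sqrt 2) * sqrt 2 ^ L"
proof (induction L)
  case (Suc L)
  have "(\<Sum>l<Suc (Suc L). sqrt 2 ^ l) = (\<Sum>l<Suc L. sqrt 2 ^ l) + sqrt 2 * sqrt 2 ^ L" by simp
  also have "\<dots> \<le> (2 + sqrt 2) * sqrt 2 ^ L + sqrt 2 * sqrt 2 ^ L" using Suc by simp
  also have "\<dots> = (2 + sqrt 2) * sqrt 2 ^ Suc L" by (simp add: algebra_simps)
  finally show ?case .
qed simp

lemma two_power_floor_log_bounds:
  assumes "0 < r" "r \<le> 1"
  defines "L \<equiv> nat \<lfloor>log 2 (1 / r)\<rfloor>"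
  shows "2 ^ L \<le> 1 / r" "1 / r < 2 ^ Suc L"
proof -
  have RL: "real L = of_int \<lfloor>log 2 (1 / r)\<rfloor>" unfolding L_def using assms by simp
  have "(2::real) ^ L = 2 powr real L" by (simp add: powr_realpow)
  also have "\<dots> \<le> 2 powr log 2 (1 / r)" unfolding RL by (intro powr_mono) auto
  also have "\<dots> = 1 / r" using assms by simp
  finally show "2 ^ L \<le> 1 / r" .
  have "1 / r = 2 powr log 2 (1 / r)" using assms by simp
  also have "\<dots> < 2 powr (real L + 1)" unfolding RL by (intro powr_less_mono) linarith+
  also have "\<dots> = 2 ^ Suc L" by (simp add: powr_realpow[symmetric] powr_add)
  finally show "1 / r < 2 ^ Suc L" .
qed

lemma inverse_min_le: "0 < a \<Longrightarrow> 0 < b \<Longrightarrow> 1 / min a b \<le> 1 / a + 1 / (b::real)"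
  by (cases "a \<le> b") (simp_all add: min_def)

context bounded_wavelet_basis
begin

text \<open>The level \<open>m\<close> with \<open>2^m \<approx> y^(-1/(2\<alpha>+1))\<close> balances the thresholding error
  \<open>2^(m/2) \<surd>y\<close> of the low levels against the tail \<open>2^(-m\<alpha>)\<close> of the high levels.\<close>
lemma resolution_level:
  assumes y: "0 < y" "y \<le> 1"
  obtains m where "(\<Sum>l<m. 2 powr (real l / 2)) * sqrt y \<le> 4 * y powr (\<alpha> / (2 * \<alpha> + 1))"
    and "q ^ m \<le> y powr (\<alpha> / (2 * \<alpha> + 1))" and "2 ^ m \<le> 2 / y"
proof -
  define g where "g = \<alpha> / (2 * \<alpha> + 1)"
  define r where "r = y powr (1 / (2 * \<alpha> + 1))"
  define L where "L = nat \<lfloor>log 2 (1 / r)\<rfloor>"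
  have a: "0 < 2 * \<alpha> + 1" using alpha_pos by simp
  have r: "0 < r" "r \<le> 1" unfolding r_def using y a by (auto simp: powr_le1)
  have L: "2 ^ L \<le> 1 / r" "1 / r < 2 ^ Suc L"
    using two_power_floor_log_bounds[OF r] by (simp_all add: L_def)
  have "y / r = y powr (1 - 1 / (2 * \<alpha> + 1))" unfolding r_def using y by (simp add: powr_diff)
  also have "1 - 1 / (2 * \<alpha> + 1) = 2 * g" unfolding g_def using a by (simp add: field_simps)
  finally have sqrt_y_r: "sqrt (y / r) = y powr g"
    using y by (simp add: powr_half_sqrt[symmetric] powr_powr)
  have "(\<Sum>l<Suc L. 2 powr (real l / 2)) = (\<Sum>l<Suc L. sqrt 2 ^ l)"
    by (simp add: two_powr_half)
  also have "\<dots> \<le> (2 + sqrt 2) * sqrt (2 ^ L)"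
    using sum_sqrt2_power_le[of L] by (simp add: real_sqrt_power)
  also have "\<dots> \<le> 4 * sqrt (1 / r)"
    using real_sqrt_le_mono[of 2 4] real_sqrt_le_mono[OF L(1)] by (intro mult_mono) auto
  finally have "(\<Sum>l<Suc L. 2 powr (real l / 2)) * sqrt y \<le> 4 * sqrt (1 / r) * sqrt y"
    by (rule mult_right_mono) (use y in simp)
  also have "\<dots> = 4 * sqrt (y / r)" by (simp add: real_sqrt_divide)
  also have "\<dots> = 4 * y powr g" by (simp add: sqrt_y_r)
  finally have low: "(\<Sum>l<Suc L. 2 powr (real l / 2)) * sqrt y \<le> 4 * y powr g" .
  have two_pow: "(2::real) powr real (Suc L) = 2 ^ Suc L" by (rule powr_realpow) simp
  have "q ^ Suc L = q powr real (Suc L)" by (rule powr_realpow[OF q_pos, symmetric])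
  also have "\<dots> = (2 ^ Suc L) powr (- \<alpha>)"
    unfolding q_def two_pow[symmetric] by (simp add: powr_powr mult.commute)
  also have "\<dots> \<le> (1 / r) powr (- \<alpha>)" using L r alpha_pos by (intro powr_mono2') auto
  also have "\<dots> = y powr g" using r y by (simp add: r_def g_def powr_divide powr_minus_divide powr_powr)
  finally have high: "q ^ Suc L \<le> y powr g" .
  have "1 / r = (1 / y) powr (1 / (2 * \<alpha> + 1))" unfolding r_def using y by (simp add: powr_divide)
  also have "\<dots> \<le> (1 / y) powr 1" using y a alpha_pos by (intro powr_mono) (auto simp: field_simps)
  finally have "2 ^ Suc L \<le> 2 / y" using L(1) y by simp
  with low high show ?thesis by (intro that[of "Suc L"]) (simp_all add: g_def)
qed

definition coord_error_const :: "real \<Rightarrow> real \<Rightarrow> real" where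
  "coord_error_const B R = 3 * B * C + 8 * B\<^sup>2 * C + 2 * B\<^sup>2 * C / (B - R)"

definition rate_const :: "real \<Rightarrow> real \<Rightarrow> real" where
  "rate_const B R = 64 * C + 2 * B * C / (1 - q) + 4 * coord_error_const B R"

lemma weighted_coord_error_le:
  assumes RB: "R < B" and R: "R \<ge> 0" and \<tau>: "\<tau> > 0" and n: "real n \<ge> 1" and \<tau>_n: "1 / \<tau> \<le> real n"
    and e1: "exp (- (sqrt (real n) * \<tau> / 4)\<^sup>2 / 4) \<le> 1 / real n ^ 4"
    and e2: "exp (- 5 * real n * \<tau>\<^sup>2 / 32) \<le> 1 / real n ^ 5"
  shows "C * 2 powr (real l / 2) * coord_error B R \<tau> n (sigma_l \<alpha> l) \<le> coord_error_const B R / real n ^ 4"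
proof -
  define \<sigma> where "\<sigma> = sigma_l \<alpha> l"
  define w where "w = C * 2 powr (real l / 2)"
  have B: "B > 0" and BR: "B - R > 0" using RB R by auto
  have \<sigma>: "0 < \<sigma>" "\<sigma> \<le> 1" unfolding \<sigma>_def using sigma_l_pos sigma_l_le_1 alpha_pos by auto
  have w\<sigma>: "w * \<sigma> \<le> C"
    using sigma_l_mult_weight[of l] C_pos q_pos q_less_1
    by (simp add: w_def \<sigma>_def mult.assoc[symmetric] mult.commute[of _ "sigma_l \<alpha> l"] power_le_one)
  have w: "w \<ge> 0" unfolding w_def using C_pos by simp
  have "w * (2 * B * \<sigma> * sqrt 2 * exp (- (sqrt (real n) * \<tau> / 4)\<^sup>2 / 4))
      = (2 * B * sqrt 2) * ((w * \<sigma>) * exp (- (sqrt (real n) * \<tau> / 4)\<^sup>2 / 4))"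
    by (simp add: algebra_simps)
  also have "\<dots> \<le> (2 * B * sqrt 2) * (C * (1 / real n ^ 4))"
    using w\<sigma> e1 C_pos B by (intro mult_left_mono mult_mono) auto
  also have "\<dots> \<le> 3 * B * C / real n ^ 4"
  proof -
    have "sqrt 2 \<le> 3 / 2" by (rule real_le_lsqrt) (auto simp: power2_eq_square)
    then show ?thesis using B C_pos n by (simp add: field_simps)
  qed
  finally have first: "w * (2 * B * \<sigma> * sqrt 2 * exp (- (sqrt (real n) * \<tau> / 4)\<^sup>2 / 4))
      \<le> 3 * B * C / real n ^ 4" .
  have min_inv: "1 / min (\<tau> / 4) ((B - R) * \<sigma>) \<le> 4 / \<tau> + 1 / ((B - R) * \<sigma>)"
    using inverse_min_le[of "\<tau> / 4" "(B - R) * \<sigma>"] \<tau> BR \<sigma> by simp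
  have "w * (2 * (B * \<sigma>)\<^sup>2 / min (\<tau> / 4) ((B - R) * \<sigma>) * exp (- 5 * real n * \<tau>\<^sup>2 / 32))
      = 2 * B\<^sup>2 * (w * \<sigma>) * (\<sigma> * (1 / min (\<tau> / 4) ((B - R) * \<sigma>))) * exp (- 5 * real n * \<tau>\<^sup>2 / 32)"
    by (simp add: power2_eq_square)
  also have "\<dots> \<le> 2 * B\<^sup>2 * C * (\<sigma> * (4 / \<tau> + 1 / ((B - R) * \<sigma>))) * (1 / real n ^ 5)"
    using w\<sigma> min_inv e2 w \<sigma> B \<tau> BR C_pos
    by (intro mult_mono mult_left_mono) (auto intro!: mult_nonneg_nonneg add_nonneg_nonneg)
  also have "\<dots> \<le> 2 * B\<^sup>2 * C * (4 * real n + 1 / (B - R)) * (1 / real n ^ 5)"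
  proof -
    have "\<sigma> * (4 / \<tau>) \<le> 4 * real n" using \<sigma> \<tau> \<tau>_n by (simp add: field_simps mult_mono)
    then have "\<sigma> * (4 / \<tau> + 1 / ((B - R) * \<sigma>)) \<le> 4 * real n + 1 / (B - R)"
      using \<sigma> by (simp add: distrib_left)
    then show ?thesis using B C_pos n by (intro mult_right_mono mult_left_mono) auto
  qed
  also have "2 * B\<^sup>2 * C * (4 * real n + 1 / (B - R)) * (1 / real n ^ 5)
      \<le> (8 * B\<^sup>2 * C + 2 * B\<^sup>2 * C / (B - R)) / real n ^ 4"
  proof -
    have "1 / real n ^ 5 \<le> 1 / real n ^ 4" using n by (simp add: divide_left_mono power_increasing)
    then have "2 * B\<^sup>2 * C / (B - R) * (1 / real n ^ 5) \<le> 2 * B\<^sup>2 * C / (B - R) * (1 / real n ^ 4)"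
      using B BR C_pos by (intro mult_left_mono) auto
    moreover have "2 * B\<^sup>2 * C * (4 * real n) * (1 / real n ^ 5) = 8 * B\<^sup>2 * C / real n ^ 4"
      using n by (simp add: power_eq_if)
    ultimately show ?thesis by (simp add: algebra_simps add_divide_distrib)
  qed
  finally have second: "w * (2 * (B * \<sigma>)\<^sup>2 / min (\<tau> / 4) ((B - R) * \<sigma>) * exp (- 5 * real n * \<tau>\<^sup>2 / 32))
      \<le> (8 * B\<^sup>2 * C + 2 * B\<^sup>2 * C / (B - R)) / real n ^ 4" .
  show ?thesis
    using first second unfolding coord_error_def coord_error_const_def w_def[symmetric] \<sigma>_def[symmetric]
    by (simp add: distrib_left add_divide_distrib)
qed

lemma coef_ball_wcoefsI:
  assumes "\<forall>l k. k < 2 ^ l \<longrightarrow> 2 powr (real l * (1/2 + \<alpha>)) * \<bar>wcoef \<psi> f l k\<bar> \<le> R"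
  shows "coef_ball R (wcoefs \<psi> f)"
  unfolding coef_ball_def
proof (intro allI impI)
  fix l k :: nat assume k: "k < 2 ^ l"
  have "sigma_l \<alpha> l * 2 powr (real l * (1/2 + \<alpha>)) = 1"
    unfolding sigma_l_def by (simp add: powr_add[symmetric])
  then have "\<bar>wcoef \<psi> f l k\<bar> = sigma_l \<alpha> l * (2 powr (real l * (1/2 + \<alpha>)) * \<bar>wcoef \<psi> f l k\<bar>)"
    by (simp add: mult.assoc[symmetric])
  also have "\<dots> \<le> sigma_l \<alpha> l * R"
    using assms k sigma_l_pos[of \<alpha> l] by (intro mult_left_mono) auto
  finally show "\<bar>wcoefs \<psi> f (l, k)\<bar> \<le> R * sigma_l \<alpha> l" by (simp add: mult.commute)
qed

lemma sum_weighted_coord_error_le: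
  assumes RB: "R < B" and R: "R \<ge> 0" and n: "n \<ge> 2" and m: "2 ^ m \<le> 4 * real n"
  defines "\<tau> \<equiv> 16 * sqrt (ln (real n) / real n)"
  shows "(\<Sum>l<m. 2 ^ l * (C * 2 powr (real l / 2) * coord_error B R \<tau> n (sigma_l \<alpha> l)))
    \<le> 4 * coord_error_const B R / real n ^ 3"
proof -
  define K where "K = coord_error_const B R"
  have K: "K \<ge> 0" unfolding K_def coord_error_const_def using RB R C_pos by simp
  have "(\<Sum>l<m. 2 ^ l * (C * 2 powr (real l / 2) * coord_error B R \<tau> n (sigma_l \<alpha> l)))
      \<le> (\<Sum>l<m. 2 ^ l * (K / real n ^ 4))"
    using threshold_bounds[OF n, folded \<tau>_def] n unfolding K_def
    by (intro sum_mono mult_left_mono weighted_coord_error_le[OF RB R]) auto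
  also have "\<dots> = (\<Sum>l<m. (2::real) ^ l) * (K / real n ^ 4)"
    by (simp only: sum_distrib_right)
  also have "\<dots> \<le> 4 * real n * (K / real n ^ 4)"
  proof (rule mult_right_mono)
    have "(\<Sum>l<m. (2::real) ^ l) \<le> 2 ^ m" by (induction m) auto
    then show "(\<Sum>l<m. (2::real) ^ l) \<le> 4 * real n" using m by linarith
  qed (use K in simp)
  also have "\<dots> = 4 * K / real n ^ 3" using n by (simp add: power_eq_if)
  finally show ?thesis by (simp add: K_def)
qed

lemma truncation_error_le:
  assumes B: "B \<ge> 0" and y: "0 < y"
    and low: "(\<Sum>l<m. 2 powr (real l / 2)) * sqrt y \<le> 4 * \<rho>" and high: "q ^ m \<le> \<rho>"
  shows "truncation_error B (16 * sqrt y) m \<le> (64 * C + 2 * B * C / (1 - q)) * \<rho>"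
proof -
  have "(\<Sum>l<m. C * 2 powr (real l / 2) * (16 * sqrt y)) = 16 * C * ((\<Sum>l<m. 2 powr (real l / 2)) * sqrt y)"
    by (simp add: sum_distrib_left sum_distrib_right algebra_simps)
  also have "\<dots> \<le> 16 * C * (4 * \<rho>)" using low C_pos by (intro mult_left_mono) auto
  finally have "(\<Sum>l<m. C * 2 powr (real l / 2) * (16 * sqrt y)) \<le> 64 * C * \<rho>" by simp
  moreover have "2 * B * C * q ^ m / (1 - q) \<le> 2 * B * C / (1 - q) * \<rho>"
    using high B C_pos q_less_1 by (simp add: divide_simps mult_left_mono)
  ultimately show ?thesis unfolding truncation_error_def by (simp add: algebra_simps)
qed

lemma error_terms_le_rate:
  assumes RB: "R < B" and R: "R \<ge> 0" and n: "n \<ge> 2"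
  obtains \<tau> m where "\<tau> > 0"
    and "truncation_error B \<tau> m
        + (\<Sum>l<m. 2 ^ l * (C * 2 powr (real l / 2) * coord_error B R \<tau> n (sigma_l \<alpha> l)))
      \<le> rate_const B R * (ln (real n) / real n) powr (\<alpha> / (2 * \<alpha> + 1))"
proof -
  define y where "y = ln (real n) / real n"
  define \<rho> where "\<rho> = y powr (\<alpha> / (2 * \<alpha> + 1))"
  have y: "0 < y" "y \<le> 1" "1 / (2 * real n) \<le> y" using ln_over_n_bounds[OF n] by (simp_all add: y_def)
  obtain m where low: "(\<Sum>l<m. 2 powr (real l / 2)) * sqrt y \<le> 4 * \<rho>"
    and high: "q ^ m \<le> \<rho>" and levels: "2 ^ m \<le> 2 / y"
    using resolution_level[OF y(1,2)] unfolding \<rho>_def by blast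
  have "1 \<le> 2 * real n * y" using y(3) n by (simp add: field_simps)
  then have "2 / y \<le> 4 * real n" using y(1) by (simp add: field_simps)
  with levels have "2 ^ m \<le> 4 * real n" by linarith
  from sum_weighted_coord_error_le[OF RB R n this, folded y_def]
  have "(\<Sum>l<m. 2 ^ l * (C * 2 powr (real l / 2) * coord_error B R (16 * sqrt y) n (sigma_l \<alpha> l)))
      \<le> 4 * coord_error_const B R * (1 / real n ^ 3)" by simp
  also have "\<dots> \<le> 4 * coord_error_const B R * \<rho>"
  proof (rule mult_left_mono)
    show "1 / real n ^ 3 \<le> \<rho>"
      using inverse_cube_le_ln_over_n_powr[OF n, of "\<alpha> / (2 * \<alpha> + 1)"] alpha_pos
      by (simp add: \<rho>_def y_def)
    show "0 \<le> 4 * coord_error_const B R" using RB R C_pos by (simp add: coord_error_const_def)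
  qed
  moreover have "truncation_error B (16 * sqrt y) m \<le> (64 * C + 2 * B * C / (1 - q)) * \<rho>"
    using RB R by (intro truncation_error_le[OF _ y(1) low high]) simp
  ultimately have "truncation_error B (16 * sqrt y) m
        + (\<Sum>l<m. 2 ^ l * (C * 2 powr (real l / 2) * coord_error B R (16 * sqrt y) n (sigma_l \<alpha> l)))
      \<le> rate_const B R * \<rho>"
    unfolding rate_const_def distrib_right by linarith
  moreover have "16 * sqrt y > 0" using y by simp
  ultimately show ?thesis by (intro that) (simp_all add: \<rho>_def y_def)
qed

theorem posterior_contraction_rate:
  assumes RB: "R < B" and R: "R \<ge> 0" and f: "in_Linf01 f" and c: "coef_ball R (wcoefs \<psi> f)"
  shows "\<exists>M>0. \<forall>n::nat. n \<ge> 2 \<longrightarrow>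
    (\<integral>\<^sup>+ \<epsilon>. (\<integral>\<^sup>+ \<theta>. Linf_norm01 (\<lambda>t. wsynth \<psi> \<theta> t - f t)
                  \<partial>posterior \<alpha> B n (observ \<psi> f n \<epsilon>)) \<partial>noise)
      \<le> ennreal (M * (ln (real n) / real n) powr (\<alpha> / (2 * \<alpha> + 1)))"
proof (intro exI conjI allI impI)
  show "rate_const B R > 0"
    unfolding rate_const_def coord_error_const_def using C_pos RB R q_less_1
    by (intro add_pos_nonneg) auto
  fix n :: nat assume n: "n \<ge> 2"
  obtain \<tau> m where "\<tau> > 0" and bound: "truncation_error B \<tau> m
        + (\<Sum>l<m. 2 ^ l * (C * 2 powr (real l / 2) * coord_error B R \<tau> n (sigma_l \<alpha> l)))
      \<le> rate_const B R * (ln (real n) / real n) powr (\<alpha> / (2 * \<alpha> + 1))"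
    using error_terms_le_rate[OF RB R n] .
  show "(\<integral>\<^sup>+ \<epsilon>. (\<integral>\<^sup>+ \<theta>. Linf_norm01 (\<lambda>t. wsynth \<psi> \<theta> t - f t)
                  \<partial>posterior \<alpha> B n (observ \<psi> f n \<epsilon>)) \<partial>noise)
      \<le> ennreal (rate_const B R * (ln (real n) / real n) powr (\<alpha> / (2 * \<alpha> + 1)))"
    using posterior_risk_le[OF RB R f c \<open>\<tau> > 0\<close>, of n m] n bound
    by (auto elim!: order_trans intro: ennreal_leI)
qed

end

theorem proposition1:
  fixes \<psi> :: "nat \<Rightarrow> nat \<Rightarrow> real \<Rightarrow> real" and S \<alpha> R B :: real and f0 :: "real \<Rightarrow> real"
  assumes "wavelet_basis \<psi> S" and "S \<ge> \<alpha>"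
    and "\<alpha> > 0" and "R > 0" and "B > R"
    and "in_Linf01 f0"
    and "\<forall>l k. k < 2 ^ l \<longrightarrow> 2 powr (real l * (1/2 + \<alpha>)) * \<bar>wcoef \<psi> f0 l k\<bar> \<le> R"
  shows "\<exists>M>0. \<forall>n::nat. n \<ge> 2 \<longrightarrow>
    (\<integral>\<^sup>+ \<epsilon>. (\<integral>\<^sup>+ \<theta>. Linf_norm01 (\<lambda>t. wsynth \<psi> \<theta> t - f0 t)
                  \<partial>posterior \<alpha> B n (observ \<psi> f0 n \<epsilon>)) \<partial>noise)
      \<le> ennreal (M * (ln (real n) / real n) powr (\<alpha> / (2 * \<alpha> + 1)))"
proof -
  obtain C where "bounded_wavelet_basis \<psi> C \<alpha>"
    using wavelet_basis_obtain_bounds[OF assms(1,3)] .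
  then interpret bounded_wavelet_basis \<psi> C \<alpha> .
  show ?thesis
    using posterior_contraction_rate[OF assms(5) _ assms(6) coef_ball_wcoefsI[OF assms(7)]] assms(4)
    by simp
qed

end
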